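(* Let $\{a_n\}$ be positive with $a_n\to\infty$, let $\{\xi^n\}_{n\in\mathbb{N}}$ be an $\mathcal{M}(\Delta)$-valued process and fix $l\in\mathbb{N}$. Assume that for every finite family $\mathcal{P}=\{(s_i,t_i)\}_{i=1}^h$ with $0\le s_i<t_i<\infty$ the $\mathbb{R}^h$-valued process $\{(\xi^n([0,s_i]\times(t_i,\infty]))_{i=1}^h\}_{n}$ satisfies an LDP with speed $a_n$ and good rate function $I_\mathcal{P}$. Then $\{\mathrm{hist}_l(\xi^n)\}_{n\in\mathbb{N}}$ satisfies an LDP in $\mathbb{R}^{\mathcal{I}_l}$ with speed $a_n$ and a good rate function $I_l$. Moreover: (1) if every $I_\mathcal{P}$ has a unique zero, so does $I_l$; (2) if every $I_\mathcal{P}$ is convex and $\sup_n a_n^{-1}\log\mathbb{E}[\exp(a_n\sum_{I\in\mathcal{I}_l}\lambda_I\xi^n(I))]<\infty$ for every $\lambda=(\lambda_I)\in\mathbb{R}^{\mathcal{I}_l}$, then for every such $\lambda$ the limit $\varphi_l(\lambda)=\lim_{n\to\infty}a_n^{-1}\log\mathbb{E}[\exp(a_n\sum_{I\in\mathcal{I}_l}\lambda_I\xi^n(I))]$ exists in $\mathbb{R}$ and $I_l=\varphi_l^*$.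
   Context: $\Delta=\{(s,t)\in[0,\infty]^2:0\le s<t\le\infty\}$ (homeomorphic to $\{(x,y):0\le x<y\le1\}$); $\mathcal{M}(\Delta)$ the Radon measures on $\Delta$ with the vague topology. For $l\in\mathbb{N}$, $\mathcal{I}_l$ is the set of rectangles $[0,2^{-(l+1)}]\times((j-1)2^{-(l+1)},j2^{-(l+1)}]$ for integers $3\le j\le l2^{l+1}$, together with $((i-1)2^{-(l+1)},i2^{-(l+1)}]\times((j-1)2^{-(l+1)},j2^{-(l+1)}]$ for integers $2\le i\le j\le l2^{l+1}$ with $j-i\ge2$. The histogram of $\xi\in\mathcal{M}(\Delta)$ with fineness $l$ is $\mathrm{hist}_l(\xi)=(\xi(I))_{I\in\mathcal{I}_l}\in\mathbb{R}^{\mathcal{I}_l}$. $\varphi_l^*(x)=\sup_{\lambda}\{\langle\lambda,x\rangle-\varphi_l(\lambda)\}$. LDP, speed, good rate function as standard. *)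

theory Defs
  imports "HOL-Probability.Probability"
begin

text \<open>[0,\<infinity>] is modelled inside the extended reals; Delta = {(s,t). 0 \<le> s < t \<le> \<infinity>}.\<close>

definition Delta :: "(ereal \<times> ereal) set" where
  "Delta = {(s, t). 0 \<le> s \<and> s < t}"

definition radon_on_Delta :: "(ereal \<times> ereal) measure \<Rightarrow> bool" where
  "radon_on_Delta \<mu> \<longleftrightarrow>
     sets \<mu> = sets (restrict_space borel Delta) \<and>
     (\<forall>K. compact K \<and> K \<subseteq> Delta \<longrightarrow> emeasure \<mu> K < \<infinity>)"

text \<open>An M(Delta)-valued process: for each n a random Radon measure on a probability
  space M n, measurable for the vague Borel sigma-algebra, i.e. all evaluation maps
  \<omega> \<mapsto> \<xi> n \<omega> A (A Borel) are measurable.\<close>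
definition random_radon_process ::
  "(nat \<Rightarrow> 'w measure) \<Rightarrow> (nat \<Rightarrow> 'w \<Rightarrow> (ereal \<times> ereal) measure) \<Rightarrow> bool" where
  "random_radon_process M \<xi> \<longleftrightarrow>
     (\<forall>n. prob_space (M n)) \<and>
     (\<forall>n. \<forall>\<omega>\<in>space (M n). radon_on_Delta (\<xi> n \<omega>)) \<and>
     (\<forall>n A. A \<in> sets (restrict_space borel Delta) \<longrightarrow>
        (\<lambda>\<omega>. emeasure (\<xi> n \<omega> ) A) \<in> borel_measurable (M n))"

definition corner :: "real \<Rightarrow> real \<Rightarrow> (ereal \<times> ereal) set" where
  "corner s t = {(x, y). 0 \<le> x \<and> x \<le> ereal s \<and> ereal t < y}"

definition Ilset :: "nat \<Rightarrow> (ereal \<times> ereal) set set" where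
  "Ilset l =
    (let d = (1/2::real) ^ (l + 1) in
     {{ereal 0 .. ereal d} \<times> {ereal ((real j - 1) * d) <.. ereal (real j * d)} | j::nat.
        3 \<le> j \<and> j \<le> l * 2 ^ (l + 1)}
     \<union> {{ereal ((real i - 1) * d) <.. ereal (real i * d)} \<times>
         {ereal ((real j - 1) * d) <.. ereal (real j * d)} | i j :: nat.
        2 \<le> i \<and> i \<le> j \<and> j \<le> l * 2 ^ (l + 1) \<and> j - i \<ge> 2})"

definition hist :: "nat \<Rightarrow> (ereal \<times> ereal) measure \<Rightarrow> ((ereal \<times> ereal) set \<Rightarrow> real)" where
  "hist l \<xi> = (\<lambda>I\<in>Ilset l. measure \<xi> I)"

definition corner_vec :: "(real \<times> real) list \<Rightarrow> (ereal \<times> ereal) measure \<Rightarrow> (nat \<Rightarrow> real)" where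
  "corner_vec ps \<xi> = (\<lambda>i\<in>{..<length ps}. measure \<xi> (corner (fst (ps ! i)) (snd (ps ! i))))"

text \<open>R^J for a finite index set J: extensional functions J \<rightarrow> real with the product topology.\<close>
abbreviation Rpow :: "'i set \<Rightarrow> ('i \<Rightarrow> real) topology" where
  "Rpow J \<equiv> product_topology (\<lambda>_. euclideanreal) J"

definition elog :: "real \<Rightarrow> ereal" where
  "elog p = (if p = 0 then -\<infinity> else ereal (ln p))"

definition elog_enn :: "ennreal \<Rightarrow> ereal" where
  "elog_enn x = (if x = \<infinity> then \<infinity> else elog (enn2real x))"

definition good_rate_function :: "'a topology \<Rightarrow> ('a \<Rightarrow> ereal) \<Rightarrow> bool" where
  "good_rate_function X I \<longleftrightarrow>
     (\<forall>x\<in>topspace X. 0 \<le> I x) \<and>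
     (\<forall>c::real. closedin X {x\<in>topspace X. I x \<le> ereal c}) \<and>
     (\<forall>c::real. compactin X {x\<in>topspace X. I x \<le> ereal c})"

definition LDP :: "'a topology \<Rightarrow> (nat \<Rightarrow> real) \<Rightarrow> (nat \<Rightarrow> 'w measure) \<Rightarrow>
    (nat \<Rightarrow> 'w \<Rightarrow> 'a) \<Rightarrow> ('a \<Rightarrow> ereal) \<Rightarrow> bool" where
  "LDP X a M Z I \<longleftrightarrow>
     (\<forall>n. \<forall>\<omega>\<in>space (M n). Z n \<omega> \<in> topspace X) \<and>
     (\<forall>n U. openin X U \<longrightarrow> {\<omega>\<in>space (M n). Z n \<omega> \<in> U} \<in> sets (M n)) \<and>
     (\<forall>F. closedin X F \<longrightarrow>
        limsup (\<lambda>n. ereal (1 / a n) * elog (measure (M n) {\<omega>\<in>space (M n). Z n \<omega> \<in> F}))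
          \<le> - (INF x\<in>F. I x)) \<and>
     (\<forall>G. openin X G \<longrightarrow>
        - (INF x\<in>G. I x)
          \<le> liminf (\<lambda>n. ereal (1 / a n) * elog (measure (M n) {\<omega>\<in>space (M n). Z n \<omega> \<in> G})))"

definition LDP_good :: "'a topology \<Rightarrow> (nat \<Rightarrow> real) \<Rightarrow> (nat \<Rightarrow> 'w measure) \<Rightarrow>
    (nat \<Rightarrow> 'w \<Rightarrow> 'a) \<Rightarrow> ('a \<Rightarrow> ereal) \<Rightarrow> bool" where
  "LDP_good X a M Z I \<longleftrightarrow> good_rate_function X I \<and> LDP X a M Z I"

definition unique_zero :: "'a topology \<Rightarrow> ('a \<Rightarrow> ereal) \<Rightarrow> bool" where
  "unique_zero X I \<longleftrightarrow> (\<exists>!x. x \<in> topspace X \<and> I x = 0)"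

definition convex_on_Rpow :: "'i set \<Rightarrow> (('i \<Rightarrow> real) \<Rightarrow> ereal) \<Rightarrow> bool" where
  "convex_on_Rpow J I \<longleftrightarrow>
     (\<forall>x\<in>J \<rightarrow>\<^sub>E UNIV. \<forall>y\<in>J \<rightarrow>\<^sub>E UNIV. \<forall>t::real. 0 < t \<and> t < 1 \<longrightarrow>
        I (\<lambda>i\<in>J. t * x i + (1 - t) * y i) \<le> ereal t * I x + ereal (1 - t) * I y)"

definition scgf :: "(nat \<Rightarrow> real) \<Rightarrow> (nat \<Rightarrow> 'w measure) \<Rightarrow> (nat \<Rightarrow> 'w \<Rightarrow> ('i \<Rightarrow> real)) \<Rightarrow>
    'i set \<Rightarrow> nat \<Rightarrow> ('i \<Rightarrow> real) \<Rightarrow> ereal" where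
  "scgf a M Z J n lam =
     ereal (1 / a n) *
       elog_enn (\<integral>\<^sup>+ \<omega>. ennreal (exp (a n * (\<Sum>i\<in>J. lam i * Z n \<omega> i))) \<partial>M n)"

end

theory Submission
  imports Defs
begin

text \<open>
  Every histogram rectangle is a signed sum of at most four corner sets [0, s] \<times> (t, \<infinity>] with
  corners on the dyadic grid, so hist l \<xi> is a fixed linear image of a finite corner vector of \<xi>,
  and the contraction principle transfers the LDP, with rate I_l(y) = inf {I_P(x) | f x = y}.
  Linear contractions preserve a unique zero and convexity.  Under the exponential moment bound,
  Varadhan's lemma (lower bound from an open half-space, upper bound from a grid of level sets of the
  linear form) identifies the limit of the scaled cumulant generating functions as the Legendre
  transform of I_l, and a good convex rate function is the Legendre transform of that limit: a
  point below the graph is separated from the closed epigraph by the hyperplane through its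
  nearest point there.
\<close>

section \<open>Good rate functions and the contraction principle\<close>

lemma good_rate_function_nonneg:
  "good_rate_function X I \<Longrightarrow> x \<in> topspace X \<Longrightarrow> 0 \<le> I x"
  unfolding good_rate_function_def by blast

lemma good_rate_function_attains_INF:
  assumes good: "good_rate_function X I" and S: "closedin X S"
    and fin: "(INF x\<in>S. I x) < \<infinity>"
  shows "\<exists>x\<in>S. I x = (INF x\<in>S. I x)"
proof -
  have "S \<subseteq> topspace X" using S closedin_subset by auto
  then have "0 \<le> (INF x\<in>S. I x)"
    using good_rate_function_nonneg[OF good] by (intro INF_greatest) auto
  with fin obtain r where r: "(INF x\<in>S. I x) = ereal r" by (cases "INF x\<in>S. I x") auto
  define C where "C n = {x\<in>S. I x \<le> ereal (r + 1 / Suc n)}" for n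
  define K where "K = {x\<in>topspace X. I x \<le> ereal (r + 1)}"
  have K: "compactin X K" using good unfolding good_rate_function_def K_def by blast
  have level_mono: "ereal (r + 1 / Suc m) \<le> ereal (r + 1 / Suc n)" if "n \<le> m" for m n
    using that by (simp add: frac_le)
  have CK: "C n \<subseteq> K" for n
  proof -
    have "ereal (r + 1 / Suc n) \<le> ereal (r + 1)" using level_mono[of 0 n] by simp
    then show ?thesis
      using \<open>S \<subseteq> topspace X\<close> unfolding C_def K_def by (blast intro: order_trans)
  qed
  have "closedin X (C n)" for n
  proof -
    have "closedin X (S \<inter> {x\<in>topspace X. I x \<le> ereal (r + 1 / Suc n)})"
      using good unfolding good_rate_function_def by (intro closedin_Int[OF S]) blast
    moreover have "S \<inter> {x\<in>topspace X. I x \<le> ereal (r + 1 / Suc n)} = C n"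
      using \<open>S \<subseteq> topspace X\<close> unfolding C_def by blast
    ultimately show ?thesis by simp
  qed
  then have clo: "closedin (subtopology X K) (C n)" for n
    using CK by (simp add: closedin_subset_topspace)
  have ne: "C n \<noteq> {}" for n
  proof -
    have "(INF x\<in>S. I x) < ereal (r + 1 / Suc n)" using r by simp
    then show ?thesis unfolding C_def by (auto simp: INF_less_iff intro: less_imp_le)
  qed
  have "C m \<subseteq> C n" if "n \<le> m" for m n
    using level_mono[OF that] unfolding C_def by (blast intro: order_trans)
  then have "decseq C" unfolding decseq_def by blast
  with clo ne have "(\<Inter>n. C n) \<noteq> {}"
    by (intro compact_space_imp_nest) (use K in \<open>auto simp: compactin_subspace\<close>)
  then obtain x where x: "\<And>n. x \<in> C n" by blast
  have "I x \<le> ereal r"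
  proof (rule ereal_le_epsilon2)
    fix e :: real assume "0 < e"
    then obtain n where "1 / Suc n < e" using nat_approx_posE by blast
    then have "ereal (r + 1 / Suc n) \<le> ereal r + ereal e" by simp
    moreover have "I x \<le> ereal (r + 1 / Suc n)" using x[of n] unfolding C_def by blast
    ultimately show "I x \<le> ereal r + ereal e" by (rule order_trans[rotated])
  qed
  moreover have "x \<in> S" using x[of 0] unfolding C_def by auto
  ultimately show ?thesis using r by (intro bexI[of _ x] antisym INF_lower) auto
qed

definition contract_rate :: "'a topology \<Rightarrow> ('a \<Rightarrow> 'b) \<Rightarrow> ('a \<Rightarrow> ereal) \<Rightarrow> 'b \<Rightarrow> ereal" where
  "contract_rate X f I y = (INF x\<in>{x\<in>topspace X. f x = y}. I x)"

lemma contract_rate_le: "x \<in> topspace X \<Longrightarrow> contract_rate X f I (f x) \<le> I x"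
  unfolding contract_rate_def by (intro INF_lower) auto

lemma contract_rate_nonneg:
  "good_rate_function X I \<Longrightarrow> 0 \<le> contract_rate X f I y"
  unfolding contract_rate_def by (auto intro: INF_greatest good_rate_function_nonneg)

lemma closedin_fibre:
  assumes f: "continuous_map X Y f" and H: "Hausdorff_space Y"
  shows "closedin X {x\<in>topspace X. f x = y}"
proof (cases "y \<in> topspace Y")
  case True
  then have "closedin Y {y}" using H by (simp add: Hausdorff_imp_t1_space closedin_t1_singleton)
  from closedin_continuous_map_preimage[OF f this] show ?thesis by simp
next
  case False
  then have "{x\<in>topspace X. f x = y} = {}"
    using continuous_map_image_subset_topspace[OF f] by auto
  then show ?thesis by (metis closedin_empty)
qed

lemma contract_rate_attained:
  assumes "good_rate_function X I" "continuous_map X Y f" "Hausdorff_space Y"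
    and "contract_rate X f I y < \<infinity>"
  shows "\<exists>x\<in>topspace X. f x = y \<and> I x = contract_rate X f I y"
  using good_rate_function_attains_INF[OF assms(1) closedin_fibre[OF assms(2,3)]] assms(4)
  unfolding contract_rate_def by auto

lemma levelset_contract_rate:
  assumes good: "good_rate_function X I" and f: "continuous_map X Y f" and H: "Hausdorff_space Y"
  shows "{y\<in>topspace Y. contract_rate X f I y \<le> ereal c} = f ` {x\<in>topspace X. I x \<le> ereal c}"
proof
  show "{y\<in>topspace Y. contract_rate X f I y \<le> ereal c} \<subseteq> f ` {x\<in>topspace X. I x \<le> ereal c}"
  proof
    fix y assume y: "y \<in> {y\<in>topspace Y. contract_rate X f I y \<le> ereal c}"
    then have "contract_rate X f I y < \<infinity>" by (auto simp: le_less_trans)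
    then obtain x where "x \<in> topspace X" "f x = y" "I x = contract_rate X f I y"
      using contract_rate_attained[OF good f H] by blast
    then show "y \<in> f ` {x\<in>topspace X. I x \<le> ereal c}" using y by auto
  qed
  show "f ` {x\<in>topspace X. I x \<le> ereal c} \<subseteq> {y\<in>topspace Y. contract_rate X f I y \<le> ereal c}"
  proof (rule image_subsetI)
    fix x assume "x \<in> {x\<in>topspace X. I x \<le> ereal c}"
    then show "f x \<in> {y\<in>topspace Y. contract_rate X f I y \<le> ereal c}"
      using contract_rate_le[of x X f I] continuous_map_image_subset_topspace[OF f]
      by (auto intro: order_trans)
  qed
qed

lemma good_rate_function_contract_rate:
  assumes good: "good_rate_function X I" and f: "continuous_map X Y f" and H: "Hausdorff_space Y"
  shows "good_rate_function Y (contract_rate X f I)"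
proof -
  have compact: "compactin Y {y\<in>topspace Y. contract_rate X f I y \<le> ereal c}" for c
    unfolding levelset_contract_rate[OF assms]
    by (rule image_compactin[OF _ f]) (use good in \<open>simp add: good_rate_function_def\<close>)
  show ?thesis
    unfolding good_rate_function_def
    using compact compactin_imp_closedin[OF H compact] contract_rate_nonneg[OF good] by auto
qed

lemma INF_contract_rate:
  "(INF y\<in>F. contract_rate X f I y) = (INF x\<in>{x\<in>topspace X. f x \<in> F}. I x)"
proof (rule antisym)
  show "(INF y\<in>F. contract_rate X f I y) \<le> (INF x\<in>{x\<in>topspace X. f x \<in> F}. I x)"
  proof (rule INF_greatest)
    fix x assume "x \<in> {x\<in>topspace X. f x \<in> F}"
    then show "(INF y\<in>F. contract_rate X f I y) \<le> I x"
      using contract_rate_le[of x X f I] by (auto intro: order_trans[OF INF_lower])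
  qed
  show "(INF x\<in>{x\<in>topspace X. f x \<in> F}. I x) \<le> (INF y\<in>F. contract_rate X f I y)"
    unfolding contract_rate_def by (intro INF_greatest INF_mono) auto
qed

lemma LDP_good_contraction:
  assumes ldp: "LDP_good X a M Z I" and f: "continuous_map X Y f" and H: "Hausdorff_space Y"
    and Z': "\<And>n \<omega>. \<omega> \<in> space (M n) \<Longrightarrow> Z' n \<omega> = f (Z n \<omega>)"
  shows "LDP_good Y a M Z' (contract_rate X f I)"
proof -
  have good: "good_rate_function X I" using ldp unfolding LDP_good_def by blast
  have top: "\<And>n \<omega>. \<omega> \<in> space (M n) \<Longrightarrow> Z n \<omega> \<in> topspace X"
    and meas: "\<And>n U. openin X U \<Longrightarrow> {\<omega>\<in>space (M n). Z n \<omega> \<in> U} \<in> sets (M n)"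
    and upper: "\<And>F. closedin X F \<Longrightarrow> limsup (\<lambda>n. ereal (1 / a n) *
        elog (measure (M n) {\<omega>\<in>space (M n). Z n \<omega> \<in> F})) \<le> - (INF x\<in>F. I x)"
    and lower: "\<And>G. openin X G \<Longrightarrow> - (INF x\<in>G. I x) \<le> liminf (\<lambda>n. ereal (1 / a n) *
        elog (measure (M n) {\<omega>\<in>space (M n). Z n \<omega> \<in> G}))"
    using ldp unfolding LDP_good_def LDP_def by auto
  have events: "{\<omega>\<in>space (M n). Z' n \<omega> \<in> F} = {\<omega>\<in>space (M n). Z n \<omega> \<in> {x\<in>topspace X. f x \<in> F}}"
    for n F
    using top Z' by auto
  have "LDP Y a M Z' (contract_rate X f I)"
    unfolding LDP_def events INF_contract_rate
  proof (intro conjI allI impI ballI)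
    fix n \<omega> assume "\<omega> \<in> space (M n)"
    then show "Z' n \<omega> \<in> topspace Y"
      using top Z' continuous_map_image_subset_topspace[OF f] by auto
  qed (blast intro: meas upper lower openin_continuous_map_preimage[OF f]
      closedin_continuous_map_preimage[OF f])+
  then show ?thesis
    using good_rate_function_contract_rate[OF good f H] unfolding LDP_good_def by blast
qed

lemma unique_zero_contract_rate:
  assumes good: "good_rate_function X I" and f: "continuous_map X Y f"
    and H: "Hausdorff_space Y" and uz: "unique_zero X I"
  shows "unique_zero Y (contract_rate X f I)"
proof -
  obtain x0 where x0: "x0 \<in> topspace X" "I x0 = 0" "\<And>x. x \<in> topspace X \<Longrightarrow> I x = 0 \<Longrightarrow> x = x0"
    using uz unfolding unique_zero_def by auto
  have "contract_rate X f I (f x0) = 0"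
    using contract_rate_le[OF x0(1), of f I] contract_rate_nonneg[OF good, of f "f x0"] x0(2)
    by simp
  moreover have "y = f x0" if "contract_rate X f I y = 0" for y
  proof -
    have "contract_rate X f I y < \<infinity>" using that by simp
    then obtain x where "x \<in> topspace X" "f x = y" "I x = contract_rate X f I y"
      using contract_rate_attained[OF good f H] by blast
    then show ?thesis using x0(3) that by auto
  qed
  ultimately show ?thesis
    unfolding unique_zero_def using continuous_map_image_subset_topspace[OF f] x0(1) by blast
qed

lemma convex_on_Rpow_contract_rate:
  assumes good: "good_rate_function (Rpow K) I"
    and f: "continuous_map (Rpow K) (Rpow J) f"
    and cv: "convex_on_Rpow K I"
    and lin: "\<And>x y t. x \<in> K \<rightarrow>\<^sub>E UNIV \<Longrightarrow> y \<in> K \<rightarrow>\<^sub>E UNIV \<Longrightarrow>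
        f (\<lambda>i\<in>K. t * x i + (1 - t) * y i) = (\<lambda>i\<in>J. t * f x i + (1 - t) * f y i)"
  shows "convex_on_Rpow J (contract_rate (Rpow K) f I)"
proof -
  define R where "R = contract_rate (Rpow K) f I"
  have H: "Hausdorff_space (Rpow J)" by (simp add: Hausdorff_space_product_topology)
  have Rnn: "0 \<le> R y" for y unfolding R_def by (rule contract_rate_nonneg[OF good])
  have Ratt: "\<exists>x\<in>topspace (Rpow K). f x = y \<and> I x = R y" if "R y < \<infinity>" for y
    using contract_rate_attained[OF good f H] that unfolding R_def by blast
  show ?thesis unfolding convex_on_Rpow_def R_def[symmetric]
  proof (intro ballI allI impI)
    fix y y' :: "_ \<Rightarrow> real" and t :: real
    assume t: "0 < t \<and> t < 1"
    show "R (\<lambda>i\<in>J. t * y i + (1 - t) * y' i) \<le> ereal t * R y + ereal (1 - t) * R y'"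
    proof (cases "R y < \<infinity> \<and> R y' < \<infinity>")
      case False
      then show ?thesis using t Rnn[of y] Rnn[of y'] by (cases "R y"; cases "R y'") auto
    next
      case True
      then obtain x x' where x: "x \<in> topspace (Rpow K)" "f x = y" "I x = R y"
        and x': "x' \<in> topspace (Rpow K)" "f x' = y'" "I x' = R y'" using Ratt by meson
      have xK: "x \<in> K \<rightarrow>\<^sub>E UNIV" "x' \<in> K \<rightarrow>\<^sub>E UNIV" using x x' by auto
      have "R (\<lambda>i\<in>J. t * y i + (1 - t) * y' i) \<le> I (\<lambda>i\<in>K. t * x i + (1 - t) * x' i)"
        unfolding R_def contract_rate_def using lin[OF xK, of t] x x' by (intro INF_lower) auto
      also have "\<dots> \<le> ereal t * I x + ereal (1 - t) * I x'"
        using cv xK t unfolding convex_on_Rpow_def by blast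
      finally show ?thesis using x x' by simp
    qed
  qed
qed

section \<open>Convex rate functions as Legendre transforms\<close>

definition epigraph :: "'i set \<Rightarrow> (('i \<Rightarrow> real) \<Rightarrow> ereal) \<Rightarrow> (('i \<Rightarrow> real) \<times> real) set" where
  "epigraph J R = {(y, t). y \<in> J \<rightarrow>\<^sub>E UNIV \<and> R y \<le> ereal t}"

lemma closedin_epigraph:
  assumes good: "good_rate_function (Rpow J) R"
  shows "closedin (prod_topology (Rpow J) euclideanreal) (epigraph J R)"
proof -
  let ?X = "prod_topology (Rpow J) euclideanreal"
  have "openin ?X (topspace ?X - epigraph J R)"
  proof (subst openin_subopen, intro ballI)
    fix p assume p: "p \<in> topspace ?X - epigraph J R"
    obtain y t where pyt: "p = (y, t)" by (cases p)
    have y: "y \<in> J \<rightarrow>\<^sub>E UNIV" and lt: "ereal t < R y" using p by (auto simp: epigraph_def pyt)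
    obtain r where r: "ereal t < ereal r" "ereal r < R y" using ereal_dense2[OF lt] by auto
    define T where "T = (topspace (Rpow J) - {x\<in>topspace (Rpow J). R x \<le> ereal r}) \<times> {..<r}"
    have "closedin (Rpow J) {x\<in>topspace (Rpow J). R x \<le> ereal r}"
      using good unfolding good_rate_function_def by blast
    then have "openin ?X T"
      unfolding T_def using openin_topspace[of "Rpow J"]
      by (intro openin_prod_Times_iff[THEN iffD2] disjI2 conjI openin_diff) auto
    moreover have "p \<in> T" using y r unfolding T_def pyt by (simp add: not_le)
    moreover have "T \<subseteq> topspace ?X - epigraph J R"
    proof
      fix q assume "q \<in> T"
      then obtain y' s where q: "q = (y', s)" "y' \<in> topspace (Rpow J)" "\<not> R y' \<le> ereal r" "s < r"
        unfolding T_def by blast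
      have "ereal s < ereal r" using q(4) by simp
      also have "ereal r < R y'" using q(3) by (simp add: not_le)
      finally have "ereal s < R y'" .
      then show "q \<in> topspace ?X - epigraph J R" using q by (auto simp: epigraph_def)
    qed
    ultimately show "\<exists>T. openin ?X T \<and> p \<in> T \<and> T \<subseteq> topspace ?X - epigraph J R" by blast
  qed
  moreover have "epigraph J R \<subseteq> topspace ?X" by (auto simp: epigraph_def)
  ultimately show ?thesis by (simp add: closedin_def)
qed

lemma compactin_epigraph_below:
  assumes good: "good_rate_function (Rpow J) R"
  shows "compactin (prod_topology (Rpow J) euclideanreal) (epigraph J R \<inter> (topspace (Rpow J) \<times> {..T}))"
proof (rule closed_compactin)
  let ?X = "prod_topology (Rpow J) euclideanreal"
  show "compactin ?X ({x\<in>topspace (Rpow J). R x \<le> ereal T} \<times> {0..T})"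
    unfolding compactin_Times using good unfolding good_rate_function_def by auto
  show "epigraph J R \<inter> (topspace (Rpow J) \<times> {..T}) \<subseteq> {x\<in>topspace (Rpow J). R x \<le> ereal T} \<times> {0..T}"
  proof
    fix p assume "p \<in> epigraph J R \<inter> (topspace (Rpow J) \<times> {..T})"
    then obtain y t where p: "p = (y,t)" "y \<in> J \<rightarrow>\<^sub>E UNIV" "R y \<le> ereal t" "t \<le> T"
      by (auto simp: epigraph_def)
    moreover have "0 \<le> R y" using good_rate_function_nonneg[OF good] p(2) by simp
    then have "0 \<le> t" using p(3) by (metis ereal_less_eq(5) order_trans)
    moreover have "R y \<le> ereal T" using p(3,4) by (meson ereal_less_eq(3) order_trans)
    ultimately show "p \<in> {x\<in>topspace (Rpow J). R x \<le> ereal T} \<times> {0..T}" by auto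
  qed
  have "closedin ?X (topspace (Rpow J) \<times> {..T})"
    using closedin_topspace[of "Rpow J"] by (simp add: closedin_prod_Times_iff)
  then show "closedin ?X (epigraph J R \<inter> (topspace (Rpow J) \<times> {..T}))"
    by (intro closedin_Int closedin_epigraph[OF good])
qed

definition sqdist_to :: "'i set \<Rightarrow> ('i \<Rightarrow> real) \<Rightarrow> real \<Rightarrow> ('i \<Rightarrow> real) \<times> real \<Rightarrow> real" where
  "sqdist_to J x0 c p = (\<Sum>i\<in>J. (fst p i - x0 i) * (fst p i - x0 i)) + (snd p - c) * (snd p - c)"

lemma continuous_map_sqdist_to: "continuous_map (prod_topology (Rpow J) euclideanreal) euclideanreal (sqdist_to J x0 c)"
  if fin: "finite J"
proof -
  have pr: "continuous_map (prod_topology (Rpow J) euclideanreal) euclideanreal (\<lambda>p. fst p i)" if "i \<in> J" for i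
    using continuous_map_compose[OF continuous_map_fst continuous_map_product_projection[OF that]]
    by (simp add: o_def)
  show ?thesis unfolding sqdist_to_def
    by (intro continuous_map_add continuous_map_sum continuous_map_real_mult continuous_map_diff pr
        continuous_map_snd continuous_map_const[THEN iffD2]) (auto simp: fin)
qed

lemma epigraph_nearest_point:
  assumes fin: "finite J" and good: "good_rate_function (Rpow J) R"
    and y1: "y1 \<in> topspace (Rpow J)" "R y1 < \<infinity>"
  shows "\<exists>p\<in>epigraph J R. \<forall>e\<in>epigraph J R. sqdist_to J x0 c p \<le> sqdist_to J x0 c e"
proof -
  let ?X = "prod_topology (Rpow J) euclideanreal"
  let ?D = "sqdist_to J x0 c"
  note nn = good_rate_function_nonneg[OF good]
  define t1 where "t1 = real_of_ereal (R y1)"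
  have Ry1: "R y1 = ereal t1" using y1 nn[OF y1(1)] unfolding t1_def by (cases "R y1") auto
  have y1_epi: "(y1, t1) \<in> epigraph J R" using y1 Ry1 by (auto simp: epigraph_def)
  define r where "r = ?D (y1, t1)"
  have sum_sq_nonneg: "0 \<le> (\<Sum>i\<in>J. (fst p i - x0 i) * (fst p i - x0 i))" for p
    by (intro sum_nonneg) auto
  have sqdist_ge: "(snd p - c) * (snd p - c) \<le> ?D p" for p unfolding sqdist_to_def using sum_sq_nonneg[of p] by linarith
  txt \<open>Epigraph points above height T are farther from (x0, c) than (y1, t1), so the
    minimum over the compact truncation at T is global.\<close>
  define T where "T = max t1 (\<bar>c\<bar> + r + 1)"
  have r_nonneg: "0 \<le> r" unfolding r_def sqdist_to_def using sum_sq_nonneg[of "(y1,t1)"] by auto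
  have t1T: "t1 \<le> T" unfolding T_def by simp
  define K where "K = epigraph J R \<inter> (topspace (Rpow J) \<times> {..T})"
  have "compactin ?X K" unfolding K_def by (rule compactin_epigraph_below[OF good])
  then have "compactin euclideanreal (?D ` K)" by (rule image_compactin[OF _ continuous_map_sqdist_to[OF fin]])
  then have "compact (?D ` K)" by simp
  moreover have "(y1,t1) \<in> K" using y1_epi t1T y1 by (auto simp: K_def)
  ultimately obtain p where p: "p \<in> K" "\<And>q. q \<in> K \<Longrightarrow> ?D p \<le> ?D q"
    using compact_attains_inf[of "?D ` K"] by fastforce
  have pR: "?D p \<le> r" using p(2)[OF \<open>(y1,t1) \<in> K\<close>] unfolding r_def .
  show ?thesis
  proof (intro bexI ballI)
    show "p \<in> epigraph J R" using p(1) K_def by auto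
    fix e assume e: "e \<in> epigraph J R"
    show "?D p \<le> ?D e"
    proof (cases "snd e \<le> T")
      case True
      then have "e \<in> K" using e unfolding K_def epigraph_def by (cases e) auto
      then show ?thesis using p(2) by auto
    next
      case False
      then have "r + 1 < snd e - c" unfolding T_def by linarith
      then have "(r + 1) * (r + 1) \<le> (snd e - c) * (snd e - c)"
        using r_nonneg by (intro mult_mono) auto
      moreover have "r + 1 \<le> (r + 1) * (r + 1)"
        using r_nonneg mult_right_mono[of 1 "r + 1" "r + 1"] by simp
      ultimately show ?thesis using pR sqdist_ge[of e] by linarith
    qed
  qed
qed

lemma nonneg_of_quadratic_lower_bound:
  fixes A Q :: real
  assumes Q: "0 \<le> Q" and quad: "\<And>s. 0 < s \<Longrightarrow> s < 1 \<Longrightarrow> 0 \<le> 2 * s * A + s * s * Q"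
  shows "0 \<le> A"
proof (rule ccontr)
  assume "\<not> 0 \<le> A"
  then have A: "A < 0" by simp
  define s where "s = min (1/2) (- A / (Q + 1))"
  have "0 < - A / (Q + 1)" using A Q by (intro divide_pos_pos) auto
  then have s: "0 < s" "s < 1" unfolding s_def by auto
  have "s * Q \<le> (- A / (Q + 1)) * Q" unfolding s_def using Q by (intro mult_right_mono) auto
  also have "\<dots> < - A" using A Q by (simp add: field_simps)
  finally have "s * (2 * A + s * Q) < 0" using s A by (simp add: mult_pos_neg)
  then show False using quad[OF s] by (simp add: algebra_simps)
qed

lemma sqdist_to_convex_combination:
  "sqdist_to J x0 c ((\<lambda>i\<in>J. s * y i + (1 - s) * yp i), s * t + (1 - s) * tp)
    = sqdist_to J x0 c (yp, tp)
      + 2 * s * ((\<Sum>i\<in>J. (yp i - x0 i) * (y i - yp i)) + (tp - c) * (t - tp))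
      + s * s * ((\<Sum>i\<in>J. (y i - yp i) * (y i - yp i)) + (t - tp) * (t - tp))"
proof -
  have "(\<Sum>i\<in>J. ((\<lambda>i\<in>J. s * y i + (1 - s) * yp i) i - x0 i) * ((\<lambda>i\<in>J. s * y i + (1 - s) * yp i) i - x0 i))
      = (\<Sum>i\<in>J. (yp i - x0 i) * (yp i - x0 i) + 2 * s * ((yp i - x0 i) * (y i - yp i))
          + s * s * ((y i - yp i) * (y i - yp i)))"
    by (intro sum.cong) (auto simp: algebra_simps)
  also have "\<dots> = (\<Sum>i\<in>J. (yp i - x0 i) * (yp i - x0 i)) + 2 * s * (\<Sum>i\<in>J. (yp i - x0 i) * (y i - yp i))
      + s * s * (\<Sum>i\<in>J. (y i - yp i) * (y i - yp i))"
    by (simp add: sum.distrib sum_distrib_left)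
  finally show ?thesis unfolding sqdist_to_def by (simp add: algebra_simps)
qed

lemma epigraph_nearest_point_variational:
  assumes cv: "convex_on_Rpow J R"
    and p: "(yp, tp) \<in> epigraph J R"
    and min: "\<And>e. e \<in> epigraph J R \<Longrightarrow> sqdist_to J x0 c (yp, tp) \<le> sqdist_to J x0 c e"
    and e: "(y, t) \<in> epigraph J R"
  shows "0 \<le> (\<Sum>i\<in>J. (yp i - x0 i) * (y i - yp i)) + (tp - c) * (t - tp)"
proof (rule nonneg_of_quadratic_lower_bound)
  show "0 \<le> (\<Sum>i\<in>J. (y i - yp i) * (y i - yp i)) + (t - tp) * (t - tp)"
    by (intro add_nonneg_nonneg sum_nonneg) auto
  have yE: "y \<in> J \<rightarrow>\<^sub>E UNIV" "R y \<le> ereal t" and pE: "yp \<in> J \<rightarrow>\<^sub>E UNIV" "R yp \<le> ereal tp"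
    using e p by (auto simp: epigraph_def)
  fix s :: real assume s: "0 < s" "s < 1"
  have "R (\<lambda>i\<in>J. s * y i + (1 - s) * yp i) \<le> ereal s * R y + ereal (1 - s) * R yp"
    using cv yE pE s unfolding convex_on_Rpow_def by blast
  also have "\<dots> \<le> ereal s * ereal t + ereal (1 - s) * ereal tp"
    using s yE pE by (intro add_mono ereal_mult_left_mono) auto
  finally have "((\<lambda>i\<in>J. s * y i + (1 - s) * yp i), s * t + (1 - s) * tp) \<in> epigraph J R"
    unfolding epigraph_def by simp
  from min[OF this] show "0 \<le> 2 * s * ((\<Sum>i\<in>J. (yp i - x0 i) * (y i - yp i)) + (tp - c) * (t - tp))
      + s * s * ((\<Sum>i\<in>J. (y i - yp i) * (y i - yp i)) + (t - tp) * (t - tp))"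
    unfolding sqdist_to_convex_combination by linarith
qed

lemma sum_restrict_mult: "(\<Sum>i\<in>J. (\<lambda>i\<in>J. g i) i * y i) = (\<Sum>i\<in>J. g i * y i)"
  by (intro sum.cong) auto

lemma affine_minorant_of_separation:
  assumes nn: "\<And>y. y \<in> topspace (Rpow J) \<Longrightarrow> 0 \<le> R y"
    and sep: "\<And>y t. (y, t) \<in> epigraph J R \<Longrightarrow> b \<le> (\<Sum>i\<in>J. w i * y i) + wt * t"
    and x0: "(\<Sum>i\<in>J. w i * x0 i) + wt * c < b" and wt: "0 < wt"
  shows "\<exists>lam\<in>J \<rightarrow>\<^sub>E UNIV. \<exists>\<beta>. (\<forall>y\<in>topspace (Rpow J). ereal ((\<Sum>i\<in>J. lam i * y i) + \<beta>) \<le> R y)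
            \<and> c < (\<Sum>i\<in>J. lam i * x0 i) + \<beta>"
proof -
  define lam where "lam = (\<lambda>i\<in>J. - w i / wt)"
  have lam: "(\<Sum>i\<in>J. lam i * y i) = - (\<Sum>i\<in>J. w i * y i) / wt" for y
    unfolding lam_def sum_restrict_mult sum_negf[symmetric] sum_divide_distrib by (intro sum.cong) auto
  show ?thesis
  proof (intro bexI[of _ lam] exI[of _ "b / wt"] conjI ballI)
    fix y assume y: "y \<in> topspace (Rpow J)"
    show "ereal ((\<Sum>i\<in>J. lam i * y i) + b / wt) \<le> R y"
    proof (cases "R y")
      case (real t)
      then have "b - (\<Sum>i\<in>J. w i * y i) \<le> t * wt"
        using sep[of y t] y by (simp add: epigraph_def algebra_simps)
      then show ?thesis using wt unfolding lam real by (simp add: field_simps)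
    qed (use nn[OF y] in auto)
  next
    show "c < (\<Sum>i\<in>J. lam i * x0 i) + b / wt"
      using x0 wt unfolding lam by (simp add: field_simps)
  qed (simp add: lam_def)
qed

text \<open>A vertical separating hyperplane is tilted by a large multiple; this only works because
  the rate function is nonnegative.\<close>

lemma affine_minorant_of_vertical_separation:
  assumes nn: "\<And>y. y \<in> topspace (Rpow J) \<Longrightarrow> 0 \<le> R y"
    and sep: "\<And>y t. (y, t) \<in> epigraph J R \<Longrightarrow> b \<le> (\<Sum>i\<in>J. w i * y i)"
    and x0: "(\<Sum>i\<in>J. w i * x0 i) < b"
  shows "\<exists>lam\<in>J \<rightarrow>\<^sub>E UNIV. \<exists>\<beta>. (\<forall>y\<in>topspace (Rpow J). ereal ((\<Sum>i\<in>J. lam i * y i) + \<beta>) \<le> R y)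
            \<and> c < (\<Sum>i\<in>J. lam i * x0 i) + \<beta>"
proof -
  define \<mu> where "\<mu> = b - (\<Sum>i\<in>J. w i * x0 i)"
  have \<mu>: "0 < \<mu>" using x0 unfolding \<mu>_def by simp
  define k where "k = (\<bar>c\<bar> + 1) / \<mu>"
  have k: "0 < k" unfolding k_def using \<mu> by auto
  define lam where "lam = (\<lambda>i\<in>J. - k * w i)"
  have lam: "(\<Sum>i\<in>J. lam i * y i) = - k * (\<Sum>i\<in>J. w i * y i)" for y
    unfolding lam_def sum_restrict_mult by (simp add: sum_distrib_left mult.assoc)
  show ?thesis
  proof (intro bexI[of _ lam] exI[of _ "k * b"] conjI ballI)
    fix y assume y: "y \<in> topspace (Rpow J)"
    show "ereal ((\<Sum>i\<in>J. lam i * y i) + k * b) \<le> R y"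
    proof (cases "R y")
      case (real t)
      then have "k * b \<le> k * (\<Sum>i\<in>J. w i * y i)"
        using sep[of y t] y k by (intro mult_left_mono) (auto simp: epigraph_def)
      then have "ereal ((\<Sum>i\<in>J. lam i * y i) + k * b) \<le> 0" unfolding lam by simp
      then show ?thesis using nn[OF y] by (rule order_trans)
    qed (use nn[OF y] in auto)
  next
    have "(\<Sum>i\<in>J. lam i * x0 i) + k * b = k * \<mu>"
      unfolding lam \<mu>_def by (simp add: algebra_simps)
    also have "\<dots> = \<bar>c\<bar> + 1" unfolding k_def using \<mu> by simp
    finally show "c < (\<Sum>i\<in>J. lam i * x0 i) + k * b" by linarith
  qed (simp add: lam_def)
qed

lemma convex_rate_affine_minorant:
  assumes fin: "finite J" and good: "good_rate_function (Rpow J) R"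
    and cv: "convex_on_Rpow J R"
    and y1: "y1 \<in> topspace (Rpow J)" "R y1 < \<infinity>"
    and x0: "x0 \<in> topspace (Rpow J)" and c: "ereal c < R x0"
  shows "\<exists>lam\<in>J \<rightarrow>\<^sub>E UNIV. \<exists>\<beta>. (\<forall>y\<in>topspace (Rpow J). ereal ((\<Sum>i\<in>J. lam i * y i) + \<beta>) \<le> R y)
            \<and> c < (\<Sum>i\<in>J. lam i * x0 i) + \<beta>"
proof -
  obtain yp tp where p: "(yp, tp) \<in> epigraph J R"
    and min: "\<And>e. e \<in> epigraph J R \<Longrightarrow> sqdist_to J x0 c (yp, tp) \<le> sqdist_to J x0 c e"
    using epigraph_nearest_point[OF fin good y1, of x0 c] by auto
  define w where "w i = yp i - x0 i" for i
  define b where "b = (\<Sum>i\<in>J. w i * yp i) + (tp - c) * tp"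
  have sep: "b \<le> (\<Sum>i\<in>J. w i * y i) + (tp - c) * t" if "(y, t) \<in> epigraph J R" for y t
  proof -
    have "0 \<le> (\<Sum>i\<in>J. w i * (y i - yp i)) + (tp - c) * (t - tp)"
      using epigraph_nearest_point_variational[OF cv p min that] unfolding w_def .
    then show ?thesis
      unfolding b_def by (simp add: right_diff_distrib sum_subtractf algebra_simps)
  qed
  have yp: "yp \<in> J \<rightarrow>\<^sub>E UNIV" "R yp \<le> ereal tp" using p by (auto simp: epigraph_def)
  then have "(yp, tp + 1) \<in> epigraph J R" by (auto simp: epigraph_def intro: order_trans)
  from sep[OF this] have wt: "0 \<le> tp - c" unfolding b_def by (simp add: algebra_simps)
  have "(yp, tp) \<noteq> (x0, c)" using p c by (auto simp: epigraph_def)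
  then have "0 < sqdist_to J x0 c (yp, tp)"
    using fin yp(1) x0 unfolding sqdist_to_def
    by (auto simp: add_nonneg_eq_0_iff sum_nonneg_eq_0_iff sum_nonneg less_le fun_eq_iff
        PiE_def extensional_def) metis
  moreover have "b - ((\<Sum>i\<in>J. w i * x0 i) + (tp - c) * c) = sqdist_to J x0 c (yp, tp)"
    unfolding b_def w_def sqdist_to_def by (simp add: sum_subtractf[symmetric] algebra_simps)
  ultimately have x0: "(\<Sum>i\<in>J. w i * x0 i) + (tp - c) * c < b" by linarith
  show ?thesis
  proof (cases "tp = c")
    case True
    with sep x0 show ?thesis
      by (intro affine_minorant_of_vertical_separation[OF good_rate_function_nonneg[OF good]]) auto
  next
    case False
    with wt have "0 < tp - c" by simp
    from affine_minorant_of_separation[OF good_rate_function_nonneg[OF good] sep x0 this]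
    show ?thesis .
  qed
qed

definition legendre :: "'i set \<Rightarrow> (('i \<Rightarrow> real) \<Rightarrow> ereal) \<Rightarrow> ('i \<Rightarrow> real) \<Rightarrow> ereal" where
  "legendre J R lam = (SUP y\<in>topspace (Rpow J). ereal (\<Sum>i\<in>J. lam i * y i) - R y)"

lemma legendre_ge:
  "y \<in> topspace (Rpow J) \<Longrightarrow> ereal (\<Sum>i\<in>J. lam i * y i) - R y \<le> legendre J R lam"
  unfolding legendre_def by (rule SUP_upper)

theorem convex_rate_biconjugate:
  assumes fin: "finite J" and good: "good_rate_function (Rpow J) R" and cv: "convex_on_Rpow J R"
    and y1: "y1 \<in> topspace (Rpow J)" "R y1 < \<infinity>"
    and \<phi>: "\<And>lam. lam \<in> J \<rightarrow>\<^sub>E UNIV \<Longrightarrow> ereal (\<phi> lam) = legendre J R lam"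
    and x: "x \<in> topspace (Rpow J)"
  shows "R x = (SUP lam\<in>J \<rightarrow>\<^sub>E UNIV. ereal ((\<Sum>i\<in>J. lam i * x i) - \<phi> lam))"
proof (rule antisym)
  note nn = good_rate_function_nonneg[OF good]
  show "(SUP lam\<in>J \<rightarrow>\<^sub>E UNIV. ereal ((\<Sum>i\<in>J. lam i * x i) - \<phi> lam)) \<le> R x"
  proof (rule SUP_least)
    fix lam :: "_ \<Rightarrow> real" assume lam: "lam \<in> J \<rightarrow>\<^sub>E UNIV"
    show "ereal ((\<Sum>i\<in>J. lam i * x i) - \<phi> lam) \<le> R x"
      using legendre_ge[OF x, of lam R] nn[OF x] unfolding \<phi>[OF lam, symmetric]
      by (cases "R x") auto
  qed
  show "R x \<le> (SUP lam\<in>J \<rightarrow>\<^sub>E UNIV. ereal ((\<Sum>i\<in>J. lam i * x i) - \<phi> lam))"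
  proof (rule ccontr)
    assume "\<not> ?thesis"
    then have "(SUP lam\<in>J \<rightarrow>\<^sub>E UNIV. ereal ((\<Sum>i\<in>J. lam i * x i) - \<phi> lam)) < R x" by simp
    then obtain c where c: "(SUP lam\<in>J \<rightarrow>\<^sub>E UNIV. ereal ((\<Sum>i\<in>J. lam i * x i) - \<phi> lam)) < ereal c"
        "ereal c < R x"
      using ereal_dense2 by blast
    obtain lam \<beta> where lam: "lam \<in> J \<rightarrow>\<^sub>E UNIV"
      and minor: "\<And>y. y \<in> topspace (Rpow J) \<Longrightarrow> ereal ((\<Sum>i\<in>J. lam i * y i) + \<beta>) \<le> R y"
      and cx: "c < (\<Sum>i\<in>J. lam i * x i) + \<beta>"
      using convex_rate_affine_minorant[OF fin good cv y1 x c(2)] by blast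
    have "legendre J R lam \<le> ereal (- \<beta>)"
      unfolding legendre_def
    proof (rule SUP_least)
      fix y assume y: "y \<in> topspace (Rpow J)"
      show "ereal (\<Sum>i\<in>J. lam i * y i) - R y \<le> ereal (- \<beta>)"
        using minor[OF y] nn[OF y] by (cases "R y") auto
    qed
    then have "ereal c < ereal ((\<Sum>i\<in>J. lam i * x i) - \<phi> lam)"
      using cx unfolding \<phi>[OF lam, symmetric] by simp
    also have "\<dots> \<le> (SUP lam\<in>J \<rightarrow>\<^sub>E UNIV. ereal ((\<Sum>i\<in>J. lam i * x i) - \<phi> lam))"
      using lam by (rule SUP_upper)
    finally show False using c(1) by simp
  qed
qed

section \<open>Varadhan's lemma\<close>

lemma scaled_elog_enn_le_imp:
  assumes "ereal (1 / a) * elog_enn X \<le> ereal B" "0 < a"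
  shows "X \<le> ennreal (exp (a * B))"
proof (cases "X = \<infinity>")
  case True
  then show ?thesis using assms by (simp add: elog_enn_def)
next
  case False
  show ?thesis
  proof (cases "enn2real X = 0")
    case True
    then have "X = 0" using False by (simp add: enn2real_eq_0_iff)
    then show ?thesis by simp
  next
    case nz: False
    have "ereal (1 / a) * elog_enn X = ereal (ln (enn2real X) / a)"
      using False nz by (simp add: elog_enn_def elog_def)
    then have "ln (enn2real X) / a \<le> B" using assms by simp
    then have "ln (enn2real X) \<le> a * B" using assms(2) by (simp add: divide_le_eq mult.commute)
    moreover have "0 < enn2real X" using nz by (simp add: enn2real_nonneg less_le)
    ultimately have "enn2real X \<le> exp (a * B)" by (metis exp_le_cancel_iff exp_ln)
    then have "ennreal (enn2real X) \<le> ennreal (exp (a * B))" by (rule ennreal_leI)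
    then show ?thesis using False by (simp add: ennreal_enn2real_if)
  qed
qed

lemma scaled_elog_enn_le:
  assumes "X \<le> ennreal v" "0 < v" "0 < a"
  shows "ereal (1 / a) * elog_enn X \<le> ereal (ln v / a)"
proof (cases "X = 0")
  case True
  then show ?thesis using assms by (simp add: elog_enn_def elog_def)
next
  case False
  have Xf: "X \<noteq> \<infinity>" using assms(1) by (auto simp: top_unique)
  then have pos: "0 < enn2real X" using False by (simp add: enn2real_eq_0_iff less_le)
  have "enn2real X \<le> enn2real (ennreal v)" using enn2real_mono[OF assms(1)] by simp
  then have "enn2real X \<le> v" using assms(2) by simp
  then have "ln (enn2real X) \<le> ln v" using pos by simp
  then have "ln (enn2real X) / a \<le> ln v / a" using assms(3) by (simp add: divide_right_mono)
  then show ?thesis using Xf pos by (simp add: elog_enn_def elog_def)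
qed

lemma scaled_elog_enn_ge:
  assumes "ennreal v \<le> X" "0 < v" "0 < a"
  shows "ereal (ln v / a) \<le> ereal (1 / a) * elog_enn X"
proof (cases "X = \<infinity>")
  case True
  then show ?thesis using assms by (simp add: elog_enn_def)
next
  case False
  have "enn2real (ennreal v) \<le> enn2real X" using enn2real_mono[OF assms(1)] False by (simp add: less_top)
  then have "v \<le> enn2real X" using assms(2) by simp
  then have pos: "0 < enn2real X" using assms by linarith
  have "ln v \<le> ln (enn2real X)" using \<open>v \<le> enn2real X\<close> assms by simp
  then have "ln v / a \<le> ln (enn2real X) / a" using assms(3) by (simp add: divide_right_mono)
  then show ?thesis using False pos by (simp add: elog_enn_def elog_def)
qed

lemma scaled_elog_less_imp:
  assumes "ereal (1 / a) * elog p < ereal c" "0 \<le> p" "0 < a"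
  shows "p \<le> exp (a * c)"
proof (cases "p = 0")
  case False
  then have "ln p / a < c" using assms by (simp add: elog_def)
  then have "ln p < a * c" using assms by (simp add: divide_less_eq mult.commute)
  then show ?thesis using False assms(2) by (metis exp_le_cancel_iff exp_ln less_eq_real_def order.strict_iff_not)
qed simp

lemma scaled_elog_greater_imp:
  assumes "ereal c < ereal (1 / a) * elog p" "0 \<le> p" "0 < a"
  shows "exp (a * c) < p"
proof (cases "p = 0")
  case True
  then show ?thesis using assms by (simp add: elog_def)
next
  case False
  then have "c < ln p / a" using assms by (simp add: elog_def)
  then have "a * c < ln p" using assms by (simp add: less_divide_eq mult.commute)
  then show ?thesis using False assms(2) by (metis exp_less_cancel_iff exp_ln less_eq_real_def)
qed

lemma continuous_map_linear_form:
  "finite J \<Longrightarrow> continuous_map (Rpow J) euclideanreal (\<lambda>y. \<Sum>i\<in>J. lam i * y i)"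
  by (intro continuous_map_sum continuous_map_real_mult continuous_map_product_projection
      continuous_map_const[THEN iffD2]) auto

lemma LDP_eventually_lower:
  assumes L: "LDP X a M Z I" and a: "\<And>n. 0 < a n"
    and G: "openin X G" and y0: "y0 \<in> G" "I y0 = ereal r0" and d: "0 < \<delta>"
  shows "eventually (\<lambda>n. exp (a n * (- r0 - \<delta>)) < measure (M n) {\<omega>\<in>space (M n). Z n \<omega> \<in> G})
    sequentially"
proof -
  have "- (INF x\<in>G. I x) \<le> liminf (\<lambda>n. ereal (1 / a n) * elog (measure (M n) {\<omega>\<in>space (M n). Z n \<omega> \<in> G}))"
    using L G unfolding LDP_def by blast
  moreover have "ereal (- r0 - \<delta>) < - (INF x\<in>G. I x)"
  proof -
    have "(INF x\<in>G. I x) \<le> ereal r0" using INF_lower[OF y0(1), of I] y0(2) by simp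
    then show ?thesis using d by (cases "INF x\<in>G. I x") auto
  qed
  ultimately have "ereal (- r0 - \<delta>) < liminf (\<lambda>n. ereal (1 / a n) *
      elog (measure (M n) {\<omega>\<in>space (M n). Z n \<omega> \<in> G}))"
    by (rule less_le_trans[rotated])
  then show ?thesis
    by (rule eventually_mono[OF less_LiminfD]) (rule scaled_elog_greater_imp, auto simp: a)
qed

lemma LDP_eventually_upper:
  assumes L: "LDP X a M Z I" and a: "\<And>n. 0 < a n"
    and F: "closedin X F" and c: "\<And>y. y \<in> F \<Longrightarrow> ereal c \<le> I y" and d: "0 < \<delta>"
  shows "eventually (\<lambda>n. measure (M n) {\<omega>\<in>space (M n). Z n \<omega> \<in> F} \<le> exp (a n * (\<delta> - c)))
    sequentially"
proof -
  have "limsup (\<lambda>n. ereal (1 / a n) * elog (measure (M n) {\<omega>\<in>space (M n). Z n \<omega> \<in> F}))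
      \<le> - (INF x\<in>F. I x)"
    using L F unfolding LDP_def by blast
  also have "- (INF x\<in>F. I x) \<le> ereal (- c)"
    using c by (metis INF_greatest ereal_minus_le_minus uminus_ereal.simps(1))
  also have "\<dots> < ereal (\<delta> - c)" using d by simp
  finally show ?thesis
    by (rule eventually_mono[OF Limsup_lessD]) (rule scaled_elog_less_imp, auto simp: a)
qed

lemma nn_integral_ge_on_set:
  assumes "A \<in> sets M" "\<And>\<omega>. \<omega> \<in> A \<Longrightarrow> ennreal e \<le> f \<omega>"
  shows "ennreal e * emeasure M A \<le> (\<integral>\<^sup>+ \<omega>. f \<omega> \<partial>M)"
proof -
  have "ennreal e * emeasure M A = (\<integral>\<^sup>+ \<omega>. ennreal e * indicator A \<omega> \<partial>M)"
    using assms(1) by (simp add: nn_integral_cmult_indicator)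
  also have "\<dots> \<le> (\<integral>\<^sup>+ \<omega>. f \<omega> \<partial>M)"
    using assms(2) by (intro nn_integral_mono) (auto split: split_indicator)
  finally show ?thesis .
qed

lemma scgf_eventually_ge:
  assumes fin: "finite J" and L: "LDP (Rpow J) a M Z R" and a: "\<And>n. 0 < a n"
    and prob: "\<And>n. prob_space (M n)"
    and y0: "y0 \<in> topspace (Rpow J)" "R y0 = ereal r0" and d: "0 < \<delta>"
  shows "eventually (\<lambda>n. ereal ((\<Sum>i\<in>J. lam i * y0 i) - r0 - 2 * \<delta>) \<le> scgf a M Z J n lam)
    sequentially"
proof -
  let ?u = "\<Sum>i\<in>J. lam i * y0 i"
  define G where "G = {y\<in>topspace (Rpow J). (\<Sum>i\<in>J. lam i * y i) \<in> {?u - \<delta> <..}}"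
  have G: "openin (Rpow J) G" unfolding G_def
    by (rule openin_continuous_map_preimage[OF continuous_map_linear_form[OF fin]]) simp
  have y0G: "y0 \<in> G" using y0 d unfolding G_def by auto
  have "eventually (\<lambda>n. exp (a n * (- r0 - \<delta>)) < measure (M n) {\<omega>\<in>space (M n). Z n \<omega> \<in> G})
      sequentially"
    by (rule LDP_eventually_lower[OF L a G y0G]) (use y0 d in auto)
  then show ?thesis
  proof (rule eventually_mono)
    fix n
    define E where "E = {\<omega>\<in>space (M n). Z n \<omega> \<in> G}"
    assume P: "exp (a n * (- r0 - \<delta>)) < measure (M n) {\<omega>\<in>space (M n). Z n \<omega> \<in> G}"
    interpret prob_space "M n" by (rule prob)
    have "E \<in> sets (M n)" using L G unfolding LDP_def E_def by blast
    define v where "v = exp (a n * (?u - \<delta>)) * exp (a n * (- r0 - \<delta>))"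
    have "ennreal v \<le> ennreal (exp (a n * (?u - \<delta>))) * emeasure (M n) E"
      using P unfolding v_def E_def
      by (simp add: emeasure_eq_measure ennreal_mult[symmetric] ennreal_leI less_imp_le)
    also have "\<dots> \<le> (\<integral>\<^sup>+ \<omega>. ennreal (exp (a n * (\<Sum>i\<in>J. lam i * Z n \<omega> i))) \<partial>M n)"
    proof (rule nn_integral_ge_on_set[OF \<open>E \<in> sets (M n)\<close>])
      fix \<omega> assume "\<omega> \<in> E"
      then have "a n * (?u - \<delta>) \<le> a n * (\<Sum>i\<in>J. lam i * Z n \<omega> i)"
        using a[of n] unfolding E_def G_def by (intro mult_left_mono) auto
      then show "ennreal (exp (a n * (?u - \<delta>))) \<le> ennreal (exp (a n * (\<Sum>i\<in>J. lam i * Z n \<omega> i)))"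
        by (intro ennreal_leI) simp
    qed
    finally have "ereal (ln v / a n) \<le> scgf a M Z J n lam"
      unfolding scgf_def by (rule scaled_elog_enn_ge) (auto simp: v_def a)
    moreover have "ln v / a n = ?u - r0 - 2 * \<delta>"
      using a[of n] unfolding v_def by (simp add: ln_mult field_simps)
    ultimately show "ereal (?u - r0 - 2 * \<delta>) \<le> scgf a M Z J n lam" by simp
  qed
qed

text \<open>The upper Varadhan bound splits the exponential moment according to the value u of the
  linear form: below -N it is negligible, on each cell of a grid of mesh \<delta> covering [-N, Mx]
  the LDP upper bound applies, and above Mx the bound exp (a u) \<le> exp (-a Mx) exp (2 a u) reduces
  it to the exponential moment at 2 lam.\<close>

lemma exp_le_grid_sum:
  fixes a \<delta> N Mx u :: real
  assumes a: "0 < a" and d: "0 < \<delta>"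
  defines "m \<equiv> \<lambda>k::nat. real k * \<delta> - N"
  shows "exp (a * u) \<le> exp (- a * N)
    + (\<Sum>k\<le>nat \<lceil>(Mx + N) / \<delta>\<rceil>. exp (a * (m k + \<delta>)) * indicator {m k .. m k + \<delta>} u)
    + exp (- a * Mx) * exp (a * (2 * u))"
  (is "_ \<le> ?low + ?mid + ?high")
proof -
  have nonneg: "0 \<le> ?low" "0 \<le> ?mid" "0 \<le> ?high" by (auto intro: sum_nonneg)
  consider "u < - N" | "Mx \<le> u" | "- N \<le> u" "u < Mx" by linarith
  then show ?thesis
  proof cases
    case 1
    then have "exp (a * u) \<le> ?low" using mult_strict_left_mono[OF 1 a] by simp
    then show ?thesis using nonneg by linarith
  next
    case 2
    then have "a * u \<le> - a * Mx + a * (2 * u)" using a by (simp add: algebra_simps)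
    then have "exp (a * u) \<le> ?high" by (simp flip: exp_add)
    then show ?thesis using nonneg by linarith
  next
    case 3
    define k where "k = nat \<lfloor>(u + N) / \<delta>\<rfloor>"
    have "0 \<le> (u + N) / \<delta>" using 3 d by simp
    then have k: "real k = of_int \<lfloor>(u + N) / \<delta>\<rfloor>" unfolding k_def by simp
    have "real k \<le> (u + N) / \<delta>" "(u + N) / \<delta> < real k + 1"
      unfolding k by linarith+
    then have u: "m k \<le> u" "u \<le> m k + \<delta>"
      using d unfolding m_def by (simp_all add: field_simps)
    have "\<lfloor>(u + N) / \<delta>\<rfloor> \<le> \<lceil>(Mx + N) / \<delta>\<rceil>"
      using 3 d by (intro order_trans[OF floor_mono floor_le_ceiling] divide_right_mono) auto
    then have kK: "k \<in> {..nat \<lceil>(Mx + N) / \<delta>\<rceil>}" unfolding k_def by (simp add: nat_mono)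
    have "exp (a * u) \<le> exp (a * (m k + \<delta>)) * indicator {m k .. m k + \<delta>} u"
      using u a by simp
    also have "\<dots> \<le> ?mid"
      by (rule member_le_sum[OF kK]) auto
    finally show ?thesis using nonneg by linarith
  qed
qed

lemma nn_integral_exp_le_grid_sum:
  fixes a \<delta> N Mx :: real
  assumes M: "prob_space M" and U[measurable]: "U \<in> borel_measurable M"
    and a: "0 < a" and d: "0 < \<delta>"
  defines "m \<equiv> \<lambda>k::nat. real k * \<delta> - N"
  shows "(\<integral>\<^sup>+ \<omega>. ennreal (exp (a * U \<omega>)) \<partial>M) \<le> ennreal (exp (- a * N))
    + (\<Sum>k\<le>nat \<lceil>(Mx + N) / \<delta>\<rceil>. ennreal (exp (a * (m k + \<delta>))) * emeasure M {\<omega>\<in>space M. U \<omega> \<in> {m k .. m k + \<delta>}})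
    + ennreal (exp (- a * Mx)) * (\<integral>\<^sup>+ \<omega>. ennreal (exp (a * (2 * U \<omega>))) \<partial>M)"
proof -
  let ?K = "nat \<lceil>(Mx + N) / \<delta>\<rceil>"
  define E where "E k = {\<omega>\<in>space M. U \<omega> \<in> {m k .. m k + \<delta>}}" for k
  have E[measurable]: "E k \<in> sets M" for k unfolding E_def by measurable
  define low where "low = (\<lambda>\<omega>::'a. ennreal (exp (- a * N)))"
  define mid where "mid = (\<lambda>\<omega>. \<Sum>k\<le>?K. ennreal (exp (a * (m k + \<delta>))) * indicator (E k) \<omega>)"
  define high where "high = (\<lambda>\<omega>. ennreal (exp (- a * Mx)) * ennreal (exp (a * (2 * U \<omega>))))"
  have [measurable]: "low \<in> borel_measurable M" "mid \<in> borel_measurable M" "high \<in> borel_measurable M"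
    unfolding low_def mid_def high_def by measurable
  have "(\<integral>\<^sup>+ \<omega>. ennreal (exp (a * U \<omega>)) \<partial>M) \<le> (\<integral>\<^sup>+ \<omega>. low \<omega> + mid \<omega> + high \<omega> \<partial>M)"
  proof (rule nn_integral_mono)
    fix \<omega> assume \<omega>: "\<omega> \<in> space M"
    have "ennreal (exp (a * U \<omega>)) \<le> ennreal (exp (- a * N)
        + (\<Sum>k\<le>?K. exp (a * (m k + \<delta>)) * indicator {m k .. m k + \<delta>} (U \<omega>))
        + exp (- a * Mx) * exp (a * (2 * U \<omega>)))"
      by (rule ennreal_leI) (use exp_le_grid_sum[OF a d] in \<open>simp add: m_def\<close>)
    also have "\<dots> = low \<omega> + mid \<omega> + high \<omega>"
      using \<omega> unfolding low_def mid_def high_def E_def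
      by (simp add: ennreal_mult' sum_nonneg flip: sum_ennreal)
    finally show "ennreal (exp (a * U \<omega>)) \<le> low \<omega> + mid \<omega> + high \<omega>" .
  qed
  also have "\<dots> = integral\<^sup>N M low + integral\<^sup>N M mid + integral\<^sup>N M high"
    by (simp add: nn_integral_add)
  also have "integral\<^sup>N M low = ennreal (exp (- a * N))"
    unfolding low_def by (simp add: prob_space.emeasure_space_1[OF M])
  also have "integral\<^sup>N M mid = (\<Sum>k\<le>?K. ennreal (exp (a * (m k + \<delta>))) * emeasure M (E k))"
    unfolding mid_def by (subst nn_integral_sum) (auto intro!: sum.cong nn_integral_cmult_indicator)
  also have "integral\<^sup>N M high = ennreal (exp (- a * Mx)) * (\<integral>\<^sup>+ \<omega>. ennreal (exp (a * (2 * U \<omega>))) \<partial>M)"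
    unfolding high_def by (simp add: nn_integral_cmult)
  finally show ?thesis unfolding E_def .
qed

lemma nn_integral_exp_le_of_cell_bounds:
  fixes a \<delta> N Mx s B :: real
  assumes M: "prob_space M" and U[measurable]: "U \<in> borel_measurable M"
    and a: "0 < a" and d: "0 < \<delta>"
    and cells: "\<And>k. k \<le> nat \<lceil>(Mx + N) / \<delta>\<rceil> \<Longrightarrow>
      measure M {\<omega>\<in>space M. U \<omega> \<in> {real k * \<delta> - N .. real k * \<delta> - N + \<delta>}}
        \<le> exp (a * (s - (real k * \<delta> - N) + \<delta>))"
    and tail: "(\<integral>\<^sup>+ \<omega>. ennreal (exp (a * (2 * U \<omega>))) \<partial>M) \<le> ennreal (exp (a * B))"
    and N: "- N \<le> s + 2 * \<delta>" and Mx: "B - Mx \<le> s + 2 * \<delta>"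
  shows "(\<integral>\<^sup>+ \<omega>. ennreal (exp (a * U \<omega>)) \<partial>M)
    \<le> ennreal ((real (nat \<lceil>(Mx + N) / \<delta>\<rceil>) + 3) * exp (a * (s + 2 * \<delta>)))"
proof -
  interpret prob_space M by (rule M)
  let ?K = "nat \<lceil>(Mx + N) / \<delta>\<rceil>"
  define W where "W = exp (a * (s + 2 * \<delta>))"
  have low: "ennreal (exp (- a * N)) \<le> ennreal W"
    unfolding W_def using mult_left_mono[OF N, of a] a by (intro ennreal_leI) simp
  have cell: "ennreal (exp (a * (real k * \<delta> - N + \<delta>)))
      * emeasure M {\<omega>\<in>space M. U \<omega> \<in> {real k * \<delta> - N .. real k * \<delta> - N + \<delta>}} \<le> ennreal W"
    if "k \<in> {..?K}" for k
  proof -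
    have "exp (a * (real k * \<delta> - N + \<delta>)) * measure M {\<omega>\<in>space M. U \<omega> \<in> {real k * \<delta> - N .. real k * \<delta> - N + \<delta>}}
        \<le> exp (a * (real k * \<delta> - N + \<delta>)) * exp (a * (s - (real k * \<delta> - N) + \<delta>))"
      using cells that by (intro mult_left_mono) auto
    also have "\<dots> = W" unfolding W_def by (simp flip: exp_add add: algebra_simps)
    finally show ?thesis
      by (simp add: emeasure_eq_measure ennreal_mult[symmetric] ennreal_leI)
  qed
  have high: "ennreal (exp (- a * Mx)) * (\<integral>\<^sup>+ \<omega>. ennreal (exp (a * (2 * U \<omega>))) \<partial>M) \<le> ennreal W"
  proof -
    have "ennreal (exp (- a * Mx)) * (\<integral>\<^sup>+ \<omega>. ennreal (exp (a * (2 * U \<omega>))) \<partial>M)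
        \<le> ennreal (exp (- a * Mx) * exp (a * B))"
      using mult_left_mono[OF tail] by (simp add: ennreal_mult)
    also have "\<dots> \<le> ennreal W"
      unfolding W_def using mult_left_mono[OF Mx, of a] a
      by (intro ennreal_leI) (simp flip: exp_add add: algebra_simps)
    finally show ?thesis .
  qed
  have "(\<integral>\<^sup>+ \<omega>. ennreal (exp (a * U \<omega>)) \<partial>M) \<le> ennreal W + (\<Sum>k\<le>?K. ennreal W) + ennreal W"
    by (rule order_trans[OF nn_integral_exp_le_grid_sum[OF M U a d, of N Mx]
          add_mono[OF add_mono[OF low sum_mono[OF cell]] high]])
  also have "\<dots> = ennreal ((real ?K + 3) * W)"
  proof -
    have W: "0 \<le> W" unfolding W_def by simp
    have "(\<Sum>k\<le>?K. ennreal W) = ennreal (\<Sum>k\<le>?K. W)"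
      by (rule sum_ennreal) (rule W)
    also have "(\<Sum>k\<le>?K. W) = (real ?K + 1) * W" by simp
    finally have "(\<Sum>k\<le>?K. ennreal W) = ennreal ((real ?K + 1) * W)" .
    moreover have "ennreal W + ennreal ((real ?K + 1) * W) + ennreal W = ennreal (W + (real ?K + 1) * W + W)"
      using W by (simp del: ennreal_plus add: ennreal_plus[symmetric])
    ultimately show ?thesis by (simp add: algebra_simps)
  qed
  finally show ?thesis unfolding W_def .
qed

lemma measurable_linear_form:
  assumes fin: "finite J" and L: "LDP (Rpow J) a M Z R"
  shows "(\<lambda>\<omega>. \<Sum>i\<in>J. lam i * Z n \<omega> i) \<in> borel_measurable (M n)"
proof (rule borel_measurableI)
  fix S :: "real set" assume S: "open S"
  let ?G = "{y\<in>topspace (Rpow J). (\<Sum>i\<in>J. lam i * y i) \<in> S}"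
  have "openin (Rpow J) ?G"
    using openin_continuous_map_preimage[OF continuous_map_linear_form[OF fin]] S by simp
  then have "{\<omega>\<in>space (M n). Z n \<omega> \<in> ?G} \<in> sets (M n)"
    using L unfolding LDP_def by blast
  moreover have "(\<lambda>\<omega>. \<Sum>i\<in>J. lam i * Z n \<omega> i) -` S \<inter> space (M n) = {\<omega>\<in>space (M n). Z n \<omega> \<in> ?G}"
    using L unfolding LDP_def by auto
  ultimately show "(\<lambda>\<omega>. \<Sum>i\<in>J. lam i * Z n \<omega> i) -` S \<inter> space (M n) \<in> sets (M n)"
    by simp
qed

lemma LDP_eventually_linear_form_interval:
  assumes fin: "finite J" and L: "LDP (Rpow J) a M Z R" and a: "\<And>n. 0 < a n"
    and s: "\<And>y. y \<in> topspace (Rpow J) \<Longrightarrow> ereal (\<Sum>i\<in>J. lam i * y i) - R y \<le> ereal s"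
    and d: "0 < \<delta>"
  shows "eventually (\<lambda>n. measure (M n) {\<omega>\<in>space (M n). (\<Sum>i\<in>J. lam i * Z n \<omega> i) \<in> {u .. v}}
    \<le> exp (a n * (s - u + \<delta>))) sequentially"
proof -
  define C where "C = {y\<in>topspace (Rpow J). (\<Sum>i\<in>J. lam i * y i) \<in> {u .. v}}"
  have "closedin (Rpow J) C" unfolding C_def
    by (rule closedin_continuous_map_preimage[OF continuous_map_linear_form[OF fin]]) simp
  moreover have "ereal (u - s) \<le> R y" if "y \<in> C" for y
    using s[of y] that unfolding C_def by (cases "R y") auto
  ultimately have "eventually (\<lambda>n. measure (M n) {\<omega>\<in>space (M n). Z n \<omega> \<in> C}
      \<le> exp (a n * (\<delta> - (u - s)))) sequentially"
    by (rule LDP_eventually_upper[OF L a _ _ d])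
  moreover have "{\<omega>\<in>space (M n). Z n \<omega> \<in> C} = {\<omega>\<in>space (M n). (\<Sum>i\<in>J. lam i * Z n \<omega> i) \<in> {u .. v}}" for n
    using L unfolding C_def LDP_def by auto
  ultimately show ?thesis by (simp add: algebra_simps)
qed

lemma scgf_eventually_le:
  assumes fin: "finite J" and L: "LDP (Rpow J) a M Z R" and a: "\<And>n. 0 < a n"
    and a_lim: "filterlim a at_top sequentially" and prob: "\<And>n. prob_space (M n)"
    and s: "\<And>y. y \<in> topspace (Rpow J) \<Longrightarrow> ereal (\<Sum>i\<in>J. lam i * y i) - R y \<le> ereal s"
    and B: "\<And>n. scgf a M Z J n (\<lambda>i\<in>J. 2 * lam i) \<le> ereal B"
    and d: "0 < \<delta>"
  shows "eventually (\<lambda>n. scgf a M Z J n lam \<le> ereal (s + 3 * \<delta>)) sequentially"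
proof -
  define N where "N = \<bar>s\<bar> + 1"
  define Mx where "Mx = \<bar>B\<bar> + \<bar>s\<bar> + 1"
  define K where "K = nat \<lceil>(Mx + N) / \<delta>\<rceil>"
  have "eventually (\<lambda>n. \<forall>k\<in>{..K}. measure (M n) {\<omega>\<in>space (M n).
      (\<Sum>i\<in>J. lam i * Z n \<omega> i) \<in> {real k * \<delta> - N .. real k * \<delta> - N + \<delta>}}
      \<le> exp (a n * (s - (real k * \<delta> - N) + \<delta>))) sequentially"
    by (intro eventually_ball_finite ballI LDP_eventually_linear_form_interval[OF fin L a s d]) auto
  moreover have "eventually (\<lambda>n. ln (real K + 3) / \<delta> \<le> a n) sequentially"
    using a_lim by (simp add: filterlim_at_top)
  ultimately show ?thesis
  proof eventually_elim
    case (elim n)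
    let ?U = "\<lambda>\<omega>. \<Sum>i\<in>J. lam i * Z n \<omega> i"
    have "(\<integral>\<^sup>+ \<omega>. ennreal (exp (a n * ?U \<omega>)) \<partial>M n)
        \<le> ennreal ((real K + 3) * exp (a n * (s + 2 * \<delta>)))"
      unfolding K_def
    proof (rule nn_integral_exp_le_of_cell_bounds[OF prob measurable_linear_form[OF fin L] a d])
      have "(\<Sum>i\<in>J. (\<lambda>i\<in>J. 2 * lam i) i * y i) = 2 * (\<Sum>i\<in>J. lam i * y i)" for y :: "_ \<Rightarrow> real"
        by (simp add: sum_distrib_left mult.assoc)
      then show "(\<integral>\<^sup>+ \<omega>. ennreal (exp (a n * (2 * ?U \<omega>))) \<partial>M n) \<le> ennreal (exp (a n * B))"
        using scaled_elog_enn_le_imp[OF B[of n, unfolded scgf_def] a] by simp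
    qed (use elim(1) d in \<open>auto simp: K_def N_def Mx_def\<close>)
    then have "scgf a M Z J n lam \<le> ereal (ln ((real K + 3) * exp (a n * (s + 2 * \<delta>))) / a n)"
      unfolding scgf_def by (rule scaled_elog_enn_le) (auto simp: a)
    also have "ln ((real K + 3) * exp (a n * (s + 2 * \<delta>))) / a n = ln (real K + 3) / a n + (s + 2 * \<delta>)"
      using a[of n] by (simp add: ln_mult add_divide_distrib)
    also have "ln (real K + 3) / a n \<le> \<delta>"
      using elim(2) a[of n] d by (simp add: divide_le_eq mult.commute)
    finally show ?case by (simp add: algebra_simps)
  qed
qed

lemma LDP_rate_finite_point:
  assumes L: "LDP (Rpow J) a M Z R" and prob: "\<And>n. prob_space (M n)"
  shows "\<exists>y\<in>topspace (Rpow J). R y < \<infinity>"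
proof -
  have "measure (M n) {\<omega>\<in>space (M n). Z n \<omega> \<in> topspace (Rpow J)} = 1" for n
  proof -
    interpret prob_space "M n" by (rule prob)
    have "{\<omega>\<in>space (M n). Z n \<omega> \<in> topspace (Rpow J)} = space (M n)"
      using L unfolding LDP_def by blast
    then show ?thesis by (simp add: prob_space)
  qed
  moreover have "limsup (\<lambda>n. ereal (1 / a n) * elog (measure (M n) {\<omega>\<in>space (M n). Z n \<omega> \<in> topspace (Rpow J)}))
      \<le> - (INF y\<in>topspace (Rpow J). R y)"
    using L closedin_topspace unfolding LDP_def by blast
  ultimately have "0 \<le> - (INF y\<in>topspace (Rpow J). R y)"
    by (simp add: elog_def Limsup_const zero_ereal_def)
  then have "(INF y\<in>topspace (Rpow J). R y) \<le> 0"
    using ereal_minus_le_minus[of 0 "INF y\<in>topspace (Rpow J). R y"] by simp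
  then have "(INF y\<in>topspace (Rpow J). R y) < \<infinity>"
    by (rule le_less_trans) simp
  then show ?thesis by (simp only: INF_less_iff)
qed

lemma scgf_bounded:
  assumes "(SUP n. scgf a M Z J n lam) < \<infinity>"
  obtains B where "\<And>n. scgf a M Z J n lam \<le> ereal B"
proof -
  obtain B where B: "(SUP n. scgf a M Z J n lam) < ereal B"
    using assms less_PInf_Ex_of_nat by auto
  show thesis
  proof (rule that)
    fix n
    have "scgf a M Z J n lam \<le> (SUP n. scgf a M Z J n lam)" by (rule SUP_upper) simp
    also have "\<dots> \<le> ereal B" using B by (rule less_imp_le)
    finally show "scgf a M Z J n lam \<le> ereal B" .
  qed
qed

lemma legendre_finite:
  assumes fin: "finite J" and LG: "LDP_good (Rpow J) a M Z R" and a: "\<And>n. 0 < a n"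
    and prob: "\<And>n. prob_space (M n)" and B: "\<And>n. scgf a M Z J n lam \<le> ereal B"
  shows "\<bar>legendre J R lam\<bar> \<noteq> \<infinity>"
proof -
  have L: "LDP (Rpow J) a M Z R" and good: "good_rate_function (Rpow J) R"
    using LG unfolding LDP_good_def by blast+
  note nn = good_rate_function_nonneg[OF good]
  obtain y1 where y1: "y1 \<in> topspace (Rpow J)" "R y1 < \<infinity>"
    using LDP_rate_finite_point[OF L prob] by blast
  have "legendre J R lam \<noteq> -\<infinity>"
    using legendre_ge[OF y1(1), of lam R] y1(2) by (cases "R y1") auto
  moreover have "legendre J R lam \<le> ereal (B + 3)"
    unfolding legendre_def
  proof (rule SUP_least)
    fix y assume y: "y \<in> topspace (Rpow J)"
    show "ereal (\<Sum>i\<in>J. lam i * y i) - R y \<le> ereal (B + 3)"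
    proof (cases "R y")
      case (real r)
      obtain n where n: "ereal ((\<Sum>i\<in>J. lam i * y i) - r - 2 * 1) \<le> scgf a M Z J n lam"
        using scgf_eventually_ge[OF fin L a prob y real, of 1 lam]
        by (auto simp: eventually_sequentially)
      show ?thesis using order_trans[OF n B[of n]] real by simp
    qed (use nn[OF y] in auto)
  qed
  ultimately show ?thesis by (cases "legendre J R lam") auto
qed

theorem scgf_tendsto_legendre:
  assumes fin: "finite J" and LG: "LDP_good (Rpow J) a M Z R" and a: "\<And>n. 0 < a n"
    and a_lim: "filterlim a at_top sequentially" and prob: "\<And>n. prob_space (M n)"
    and mom: "\<And>lam. lam \<in> J \<rightarrow>\<^sub>E UNIV \<Longrightarrow> (SUP n. scgf a M Z J n lam) < \<infinity>"
    and lam: "lam \<in> J \<rightarrow>\<^sub>E UNIV"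
  shows "(\<lambda>n. scgf a M Z J n lam) \<longlonglongrightarrow> legendre J R lam"
proof -
  have L: "LDP (Rpow J) a M Z R" and good: "good_rate_function (Rpow J) R"
    using LG unfolding LDP_good_def by blast+
  obtain B where B: "\<And>n. scgf a M Z J n lam \<le> ereal B"
    using scgf_bounded[OF mom[OF lam]] by blast
  obtain B2 where B2: "\<And>n. scgf a M Z J n (\<lambda>i\<in>J. 2 * lam i) \<le> ereal B2"
    using scgf_bounded[OF mom[of "\<lambda>i\<in>J. 2 * lam i"]] by auto
  obtain \<phi> where \<phi>: "legendre J R lam = ereal \<phi>"
    using legendre_finite[OF fin LG a prob B] by (cases "legendre J R lam") auto
  show ?thesis unfolding \<phi>
  proof (rule order_tendstoI)
    fix l assume "l < ereal \<phi>"
    then obtain z where z: "l < ereal z" "z < \<phi>" using ereal_dense2 by force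
    define \<delta> where "\<delta> = (\<phi> - z) / 3"
    have d: "0 < \<delta>" unfolding \<delta>_def using z by simp
    have "ereal (\<phi> - \<delta>) < legendre J R lam" using \<phi> d by simp
    then obtain y where y: "y \<in> topspace (Rpow J)" "ereal (\<phi> - \<delta>) < ereal (\<Sum>i\<in>J. lam i * y i) - R y"
      unfolding legendre_def by (auto simp: less_SUP_iff)
    then obtain r where r: "R y = ereal r"
      using good_rate_function_nonneg[OF good y(1)] by (cases "R y") auto
    have "z < (\<Sum>i\<in>J. lam i * y i) - r - 2 * \<delta>" using y(2) r z unfolding \<delta>_def by (simp add: field_simps)
    then have lz: "l < ereal ((\<Sum>i\<in>J. lam i * y i) - r - 2 * \<delta>)" using z(1) by (simp add: less_trans)
    show "eventually (\<lambda>n. l < scgf a M Z J n lam) sequentially"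
      using scgf_eventually_ge[OF fin L a prob y(1) r d, of lam]
      by (rule eventually_mono) (rule less_le_trans[OF lz])
  next
    fix u assume "ereal \<phi> < u"
    then obtain z where z: "ereal z < u" "\<phi> < z" using ereal_dense2 by force
    define \<delta> where "\<delta> = (z - \<phi>) / 4"
    have d: "0 < \<delta>" unfolding \<delta>_def using z by simp
    have "ereal (\<Sum>i\<in>J. lam i * y i) - R y \<le> ereal \<phi>" if "y \<in> topspace (Rpow J)" for y
      using legendre_ge[OF that, of lam R] unfolding \<phi> .
    from scgf_eventually_le[OF fin L a a_lim prob this B2 d]
    show "eventually (\<lambda>n. scgf a M Z J n lam < u) sequentially"
    proof (rule eventually_mono)
      fix n assume "scgf a M Z J n lam \<le> ereal (\<phi> + 3 * \<delta>)"
      moreover have "ereal (\<phi> + 3 * \<delta>) < ereal z" using z(2) unfolding \<delta>_def by (simp add: field_simps)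
      ultimately have "scgf a M Z J n lam < ereal z" by (rule le_less_trans)
      then show "scgf a M Z J n lam < u" using z(1) by (rule less_trans)
    qed
  qed
qed

theorem convex_rate_eq_conjugate_of_scgf_limit:
  assumes fin: "finite J" and LG: "LDP_good (Rpow J) a M Z R" and a: "\<And>n. 0 < a n"
    and a_lim: "filterlim a at_top sequentially" and prob: "\<And>n. prob_space (M n)"
    and mom: "\<And>lam. lam \<in> J \<rightarrow>\<^sub>E UNIV \<Longrightarrow> (SUP n. scgf a M Z J n lam) < \<infinity>"
    and cv: "convex_on_Rpow J R"
  shows "\<exists>\<phi>. (\<forall>lam\<in>J \<rightarrow>\<^sub>E UNIV. (\<lambda>n. scgf a M Z J n lam) \<longlonglongrightarrow> ereal (\<phi> lam)) \<and>
    (\<forall>x\<in>topspace (Rpow J). R x = (SUP lam\<in>J \<rightarrow>\<^sub>E UNIV. ereal ((\<Sum>i\<in>J. lam i * x i) - \<phi> lam)))"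
proof -
  have L: "LDP (Rpow J) a M Z R" and good: "good_rate_function (Rpow J) R"
    using LG unfolding LDP_good_def by blast+
  define \<phi> where "\<phi> lam = real_of_ereal (legendre J R lam)" for lam
  have \<phi>: "ereal (\<phi> lam) = legendre J R lam" if lam: "lam \<in> J \<rightarrow>\<^sub>E UNIV" for lam
  proof -
    obtain B where "\<And>n. scgf a M Z J n lam \<le> ereal B" using scgf_bounded[OF mom[OF lam]] by blast
    from legendre_finite[OF fin LG a prob this] show ?thesis
      unfolding \<phi>_def by (simp add: ereal_real')
  qed
  obtain y1 where y1: "y1 \<in> topspace (Rpow J)" "R y1 < \<infinity>"
    using LDP_rate_finite_point[OF L prob] by blast
  show ?thesis
  proof (intro exI[of _ \<phi>] conjI ballI)
    fix lam :: "_ \<Rightarrow> real" assume lam: "lam \<in> J \<rightarrow>\<^sub>E UNIV"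
    show "(\<lambda>n. scgf a M Z J n lam) \<longlonglongrightarrow> ereal (\<phi> lam)"
      using scgf_tendsto_legendre[OF fin LG a a_lim prob mom lam] \<phi>[OF lam] by simp
  qed (rule convex_rate_biconjugate[OF fin good cv y1 \<phi>])
qed

section \<open>Histograms as linear images of corner vectors\<close>

lemma corner_subset_Delta: "0 \<le> s \<Longrightarrow> s < t \<Longrightarrow> corner s t \<subseteq> Delta"
  unfolding corner_def Delta_def
  by auto (meson ereal_less_eq(3) less_trans not_le order_le_less_trans ereal_less(2))

lemma corner_borel: "corner s t \<in> sets borel"
proof -
  have "corner s t = {p. 0 \<le> fst p} \<inter> {p. fst p \<le> ereal s} \<inter> {p. ereal t < snd p}"
    unfolding corner_def by auto
  also have "\<dots> \<in> sets borel"
    by (intro sets.Int borel_closed borel_open closed_Collect_le open_Collect_less continuous_intros)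
  finally show ?thesis .
qed

lemma sets_radon_on_Delta:
  assumes "radon_on_Delta \<xi>" "C \<in> sets borel" "C \<subseteq> Delta"
  shows "C \<in> sets \<xi>"
proof -
  have "Delta \<inter> C \<in> sets (restrict_space borel Delta)"
    using assms(2) unfolding sets_restrict_space by auto
  then show ?thesis
    using assms unfolding radon_on_Delta_def by (simp add: Int_absorb1)
qed

lemma corner_in_sets: "radon_on_Delta \<xi> \<Longrightarrow> 0 \<le> s \<Longrightarrow> s < t \<Longrightarrow> corner s t \<in> sets \<xi>"
  by (rule sets_radon_on_Delta[OF _ corner_borel corner_subset_Delta])

lemma emeasure_corner_finite:
  assumes r: "radon_on_Delta \<xi>" and st: "0 \<le> s" "s < t"
  shows "emeasure \<xi> (corner s t) \<noteq> \<infinity>"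
proof -
  define K where "K = {ereal 0 .. ereal s} \<times> {ereal t ..}"
  have K: "compact K" unfolding K_def
    by (intro compact_Times) (auto simp: compact_eq_closed)
  have KD: "K \<subseteq> Delta"
    using st unfolding K_def Delta_def by (auto simp: zero_ereal_def) (meson ereal_less_eq(3) less_le_trans not_le)
  have "K \<in> sets \<xi>" using sets_radon_on_Delta[OF r borel_closed[OF compact_imp_closed[OF K]] KD] .
  moreover have "corner s t \<subseteq> K" unfolding corner_def K_def by (auto simp: less_imp_le zero_ereal_def)
  ultimately have "emeasure \<xi> (corner s t) \<le> emeasure \<xi> K" by (rule emeasure_mono[rotated])
  also have "\<dots> < \<infinity>" using r K KD unfolding radon_on_Delta_def by blast
  finally show ?thesis by simp
qed

lemma corner_mono: "s \<le> s' \<Longrightarrow> t' \<le> t \<Longrightarrow> corner s t \<subseteq> corner s' t'"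
  unfolding corner_def by (auto elim: order_trans le_less_trans[rotated])

lemma measure_corner_diff:
  assumes r: "radon_on_Delta \<xi>" and "0 \<le> s1" "s1 \<le> s2" "s2 < t"
  shows "measure \<xi> (corner s2 t - corner s1 t) = measure \<xi> (corner s2 t) - measure \<xi> (corner s1 t)"
  using assms by (intro measure_Diff emeasure_corner_finite corner_in_sets corner_mono) auto

lemma measure_strip:
  assumes r: "radon_on_Delta \<xi>" and st: "0 \<le> s" "s < t1" "t1 \<le> t2"
  shows "measure \<xi> ({ereal 0 .. ereal s} \<times> {ereal t1 <.. ereal t2})
    = measure \<xi> (corner s t1) - measure \<xi> (corner s t2)"
proof -
  have "{ereal 0 .. ereal s} \<times> {ereal t1 <.. ereal t2} = corner s t1 - corner s t2"
    unfolding corner_def by (auto simp: zero_ereal_def not_less)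
  then show ?thesis
    using st by (simp only:) (intro measure_Diff emeasure_corner_finite[OF r] corner_in_sets[OF r] corner_mono; simp)
qed

lemma measure_rectangle:
  assumes r: "radon_on_Delta \<xi>" and st: "0 \<le> s1" "s1 \<le> s2" "s2 < t1" "t1 \<le> t2"
  shows "measure \<xi> ({ereal s1 <.. ereal s2} \<times> {ereal t1 <.. ereal t2})
    = (measure \<xi> (corner s2 t1) - measure \<xi> (corner s1 t1))
      - (measure \<xi> (corner s2 t2) - measure \<xi> (corner s1 t2))"
proof -
  define S where "S t = corner s2 t - corner s1 t" for t
  have "{ereal s1 <.. ereal s2} \<times> {ereal t1 <.. ereal t2} = S t1 - S t2"
    unfolding S_def corner_def using st
    by (auto simp: not_le not_less) (metis ereal_less_eq(5) less_imp_le order_trans)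
  moreover have "S t \<in> sets \<xi>" "emeasure \<xi> (S t) \<noteq> \<infinity>" if "s2 < t" for t
    using that st emeasure_corner_finite[OF r, of s2 t] unfolding S_def
    by (auto intro!: sets.Diff corner_in_sets[OF r] simp: top.not_eq_extremum
        intro: le_less_trans[OF emeasure_mono])
  moreover have "ereal t1 < y" if "ereal t2 < y" for y using that st(4) by (metis ereal_less_eq(3) le_less_trans)
  then have "S t2 \<subseteq> S t1" unfolding S_def corner_def by auto
  ultimately show ?thesis
    using st measure_corner_diff[OF r, of s1 s2] unfolding S_def by (simp add: measure_Diff)
qed

definition matrix_map :: "'j set \<Rightarrow> 'k set \<Rightarrow> ('j \<Rightarrow> 'k \<Rightarrow> real) \<Rightarrow> ('k \<Rightarrow> real) \<Rightarrow> 'j \<Rightarrow> real" where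
  "matrix_map J K C x = (\<lambda>j\<in>J. \<Sum>k\<in>K. C j k * x k)"

lemma continuous_map_matrix_map:
  "finite K \<Longrightarrow> continuous_map (Rpow K) (Rpow J) (matrix_map J K C)"
  unfolding matrix_map_def continuous_map_componentwise
  by (auto intro!: continuous_map_sum continuous_map_real_mult continuous_map_product_projection)

lemma matrix_map_convex_combination:
  "matrix_map J K C (\<lambda>k\<in>K. t * x k + (1 - t) * y k)
    = (\<lambda>j\<in>J. t * matrix_map J K C x j + (1 - t) * matrix_map J K C y j)"
proof
  fix j
  show "matrix_map J K C (\<lambda>k\<in>K. t * x k + (1 - t) * y k) j
      = (\<lambda>j\<in>J. t * matrix_map J K C x j + (1 - t) * matrix_map J K C y j) j"
    unfolding matrix_map_def
    by (cases "j \<in> J") (simp_all add: distrib_left mult.left_commute sum.distrib sum_distrib_left)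
qed

lemma sum_list_eq_sum_nth:
  fixes h :: "'a \<Rightarrow> real"
  assumes ps: "distinct ps" and cs: "\<forall>(c, q)\<in>set cs. q \<in> set ps"
  shows "(\<Sum>(c, q)\<leftarrow>cs. c * h q)
    = (\<Sum>k<length ps. (\<Sum>(c, q)\<leftarrow>cs. if ps ! k = q then c else 0) * h (ps ! k))"
proof -
  have "(\<Sum>k<length ps. (\<Sum>(c, q)\<leftarrow>cs. if ps ! k = q then c else 0) * h (ps ! k))
      = (\<Sum>p\<in>set ps. (\<Sum>(c, q)\<leftarrow>cs. if p = q then c else 0) * h p)"
    by (rule sum.reindex_bij_betw[OF bij_betw_nth[OF ps refl refl]])
  also have "\<dots> = (\<Sum>(c, q)\<leftarrow>cs. c * h q)"
    using cs
  proof (induction cs)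
    case (Cons cq cs)
    obtain c q where cq: "cq = (c, q)" by (cases cq)
    have "(\<Sum>p\<in>set ps. (\<Sum>(c, q)\<leftarrow>cq # cs. if p = q then c else 0) * h p)
        = (\<Sum>p\<in>set ps. if p = q then c * h p else 0)
          + (\<Sum>p\<in>set ps. (\<Sum>(c, q)\<leftarrow>cs. if p = q then c else 0) * h p)"
      unfolding cq sum.distrib[symmetric] by (intro sum.cong) (auto simp: distrib_right)
    then show ?case using Cons cq by (simp add: sum.delta' algebra_simps)
  qed simp
  finally show ?thesis ..
qed

definition grid_step :: "nat \<Rightarrow> real" where
  "grid_step l = (1/2) ^ (l + 1)"

text \<open>The dummy corner (0, 1) makes the family nonempty also for l = 0, where Ilset l is empty.\<close>

definition corner_grid :: "nat \<Rightarrow> (real \<times> real) set" where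
  "corner_grid l = insert (0, 1) {(real i * grid_step l, real j * grid_step l) | i j :: nat.
     1 \<le> i \<and> i < j \<and> j \<le> l * 2 ^ (l + 1)}"

lemma finite_corner_grid: "finite (corner_grid l)"
proof -
  have "{(real i * grid_step l, real j * grid_step l) | i j :: nat. 1 \<le> i \<and> i < j \<and> j \<le> l * 2 ^ (l + 1)}
      \<subseteq> (\<lambda>(i, j). (real i * grid_step l, real j * grid_step l)) ` ({..l * 2 ^ (l + 1)} \<times> {..l * 2 ^ (l + 1)})"
    by auto
  then have "finite {(real i * grid_step l, real j * grid_step l) | i j :: nat.
      1 \<le> i \<and> i < j \<and> j \<le> l * 2 ^ (l + 1)}"
    by (rule finite_subset) auto
  then show ?thesis unfolding corner_grid_def by simp
qed

lemma corner_grid_valid: "(s, t) \<in> corner_grid l \<Longrightarrow> 0 \<le> s \<and> s < t"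
  using zero_less_power[of "1/2::real" "l + 1"] unfolding corner_grid_def grid_step_def[symmetric]
  by (auto intro!: mult_strict_right_mono)

lemma corner_gridI:
  "1 \<le> i \<Longrightarrow> i < j \<Longrightarrow> j \<le> l * 2 ^ (l + 1) \<Longrightarrow>
    (real i * grid_step l, real j * grid_step l) \<in> corner_grid l"
  unfolding corner_grid_def by blast

lemma Ilset_measure_eq_corner_combination:
  assumes I: "I \<in> Ilset l"
  shows "\<exists>cs. (\<forall>(c, q)\<in>set cs. q \<in> corner_grid l) \<and>
    (\<forall>\<xi>. radon_on_Delta \<xi> \<longrightarrow> measure \<xi> I = (\<Sum>(c, q)\<leftarrow>cs. c * measure \<xi> (corner (fst q) (snd q))))"
proof -
  define d where "d = grid_step l"
  have d: "0 < d" unfolding d_def grid_step_def by simp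
  have grid: "(real i * d, (real j - 1) * d) \<in> corner_grid l"
    if "1 \<le> i" "i < j - 1" "j \<le> l * 2 ^ (l + 1)" for i j :: nat
    using corner_gridI[of i "j - 1" l] that unfolding d_def by (simp add: of_nat_diff)
  have grid': "(real i * d, real j * d) \<in> corner_grid l"
    if "1 \<le> i" "i < j" "j \<le> l * 2 ^ (l + 1)" for i j :: nat
    using corner_gridI[OF that] unfolding d_def .
  from I consider
      j :: nat where "I = {ereal 0 .. ereal d} \<times> {ereal ((real j - 1) * d) <.. ereal (real j * d)}"
        "3 \<le> j" "j \<le> l * 2 ^ (l + 1)"
    | i j :: nat where "I = {ereal ((real i - 1) * d) <.. ereal (real i * d)} \<times>
        {ereal ((real j - 1) * d) <.. ereal (real j * d)}" "2 \<le> i" "2 \<le> j - i" "j \<le> l * 2 ^ (l + 1)"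
    unfolding Ilset_def Let_def d_def grid_step_def by blast
  then show ?thesis
  proof cases
    case (1 j)
    show ?thesis
    proof (intro exI[of _ "[(1, (d, (real j - 1) * d)), (-1, (d, real j * d))]"] conjI allI impI)
      show "\<forall>(c, q)\<in>set [(1, (d, (real j - 1) * d)), (-1, (d, real j * d))]. q \<in> corner_grid l"
        using 1 grid[of 1 j] grid'[of 1 j] by auto
      fix \<xi> assume "radon_on_Delta \<xi>"
      with 1 d show "measure \<xi> I = (\<Sum>(c, q)\<leftarrow>[(1, (d, (real j - 1) * d)), (-1, (d, real j * d))].
          c * measure \<xi> (corner (fst q) (snd q)))"
        by (simp add: measure_strip mult_strict_right_mono)
    qed
  next
    case (2 i j)
    define cs where "cs = [(1::real, (real i * d, (real j - 1) * d)), (-1, ((real i - 1) * d, (real j - 1) * d)),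
        (-1, (real i * d, real j * d)), (1, ((real i - 1) * d, real j * d))]"
    show ?thesis
    proof (intro exI[of _ cs] conjI allI impI)
      have "((real i - 1) * d, t) = (real (i - 1) * d, t)" for t using 2 by (simp add: of_nat_diff)
      then show "\<forall>(c, q)\<in>set cs. q \<in> corner_grid l"
        unfolding cs_def using 2 grid[of i j] grid[of "i - 1" j] grid'[of i j] grid'[of "i - 1" j] by auto
      fix \<xi> assume "radon_on_Delta \<xi>"
      have "(real i - 1) * d \<le> real i * d" "real i * d < (real j - 1) * d" "(real j - 1) * d \<le> real j * d"
        using 2 d by (auto intro: mult_strict_right_mono)
      with 2 d show "measure \<xi> I = (\<Sum>(c, q)\<leftarrow>cs. c * measure \<xi> (corner (fst q) (snd q)))"
        unfolding cs_def 2(1) by (subst measure_rectangle[OF \<open>radon_on_Delta \<xi>\<close>]) auto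
    qed
  qed
qed

lemma finite_Ilset: "finite (Ilset l)"
proof -
  define N where "N = l * 2 ^ (l + 1)"
  define d where "d = grid_step l"
  define strip where "strip j = {ereal 0 .. ereal d} \<times> {ereal ((real j - 1) * d) <.. ereal (real j * d)}" for j :: nat
  define rect where "rect i j = {ereal ((real i - 1) * d) <.. ereal (real i * d)} \<times>
         {ereal ((real j - 1) * d) <.. ereal (real j * d)}" for i j :: nat
  have "Ilset l \<subseteq> strip ` {..N} \<union> (\<lambda>(i, j). rect i j) ` ({..N} \<times> {..N})"
    unfolding Ilset_def Let_def N_def[symmetric] grid_step_def[symmetric] d_def[symmetric]
      strip_def[symmetric] rect_def[symmetric]
    by force
  then show ?thesis by (rule finite_subset) auto
qed

lemma hist_eq_matrix_map_corner_vec: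
  "\<exists>ps C. ps \<noteq> [] \<and> (\<forall>(s, t)\<in>set ps. 0 \<le> s \<and> s < t) \<and>
    (\<forall>\<eta>. radon_on_Delta \<eta> \<longrightarrow> hist l \<eta> = matrix_map (Ilset l) {..<length ps} C (corner_vec ps \<eta>))"
proof -
  obtain ps where ps: "set ps = corner_grid l" "distinct ps"
    using finite_distinct_list[OF finite_corner_grid] by blast
  have "\<forall>I\<in>Ilset l. \<exists>cs. (\<forall>(c, q)\<in>set cs. q \<in> corner_grid l) \<and>
      (\<forall>\<xi>. radon_on_Delta \<xi> \<longrightarrow> measure \<xi> I = (\<Sum>(c, q)\<leftarrow>cs. c * measure \<xi> (corner (fst q) (snd q))))"
    using Ilset_measure_eq_corner_combination by blast
  from bchoice[OF this] obtain cs where cs: "\<forall>I\<in>Ilset l. (\<forall>(c, q)\<in>set (cs I). q \<in> corner_grid l) \<and>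
      (\<forall>\<xi>. radon_on_Delta \<xi> \<longrightarrow> measure \<xi> I = (\<Sum>(c, q)\<leftarrow>cs I. c * measure \<xi> (corner (fst q) (snd q))))"
    by blast
  define C where "C I k = (\<Sum>(c, q)\<leftarrow>cs I. if ps ! k = q then c else 0)" for I k
  have "hist l \<eta> = matrix_map (Ilset l) {..<length ps} C (corner_vec ps \<eta>)" if "radon_on_Delta \<eta>" for \<eta>
  proof -
    have "measure \<eta> I = (\<Sum>k<length ps. C I k * corner_vec ps \<eta> k)" if I: "I \<in> Ilset l" for I
    proof -
      have "\<forall>(c, q)\<in>set (cs I). q \<in> set ps" using cs I unfolding ps(1) by blast
      moreover have "measure \<eta> I = (\<Sum>(c, q)\<leftarrow>cs I. c * measure \<eta> (corner (fst q) (snd q)))"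
        using cs I \<open>radon_on_Delta \<eta>\<close> by blast
      ultimately show ?thesis
        unfolding C_def corner_vec_def by (simp add: sum_list_eq_sum_nth[OF ps(2)])
    qed
    then show ?thesis unfolding hist_def matrix_map_def by auto
  qed
  moreover have "ps \<noteq> []" using ps(1) unfolding corner_grid_def by auto
  moreover have "\<forall>(s, t)\<in>set ps. 0 \<le> s \<and> s < t" using ps(1) corner_grid_valid by auto
  ultimately show ?thesis by blast
qed

theorem mainTheorem13:
  fixes a :: "nat \<Rightarrow> real"
    and M :: "nat \<Rightarrow> 'w measure"
    and \<xi> :: "nat \<Rightarrow> 'w \<Rightarrow> (ereal \<times> ereal) measure"
    and l :: nat
    and IP :: "(real \<times> real) list \<Rightarrow> (nat \<Rightarrow> real) \<Rightarrow> ereal"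
  assumes a_pos: "\<And>n. 0 < a n"
    and a_lim: "filterlim a at_top sequentially"
    and proc: "random_radon_process M \<xi>"
    and ldp_fd: "\<And>ps. ps \<noteq> [] \<Longrightarrow> (\<forall>(s, t)\<in>set ps. 0 \<le> s \<and> s < t) \<Longrightarrow>
        LDP_good (Rpow {..<length ps}) a M (\<lambda>n \<omega>. corner_vec ps (\<xi> n \<omega>)) (IP ps)"
  shows "\<exists>Il. LDP_good (Rpow (Ilset l)) a M (\<lambda>n \<omega>. hist l (\<xi> n \<omega>)) Il \<and>
     ((\<forall>ps. ps \<noteq> [] \<and> (\<forall>(s, t)\<in>set ps. 0 \<le> s \<and> s < t) \<longrightarrow>
          unique_zero (Rpow {..<length ps}) (IP ps))
        \<longrightarrow> unique_zero (Rpow (Ilset l)) Il) \<and>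
     ((\<forall>ps. ps \<noteq> [] \<and> (\<forall>(s, t)\<in>set ps. 0 \<le> s \<and> s < t) \<longrightarrow>
          convex_on_Rpow {..<length ps} (IP ps)) \<and>
      (\<forall>lam\<in>Ilset l \<rightarrow>\<^sub>E UNIV.
          (SUP n. scgf a M (\<lambda>n \<omega>. hist l (\<xi> n \<omega>)) (Ilset l) n lam) < \<infinity>)
      \<longrightarrow> (\<exists>\<phi> :: ((ereal \<times> ereal) set \<Rightarrow> real) \<Rightarrow> real.
            (\<forall>lam\<in>Ilset l \<rightarrow>\<^sub>E UNIV.
               (\<lambda>n. scgf a M (\<lambda>n \<omega>. hist l (\<xi> n \<omega>)) (Ilset l) n lam)
                 \<longlonglongrightarrow> ereal (\<phi> lam)) \<and>
            (\<forall>x\<in>topspace (Rpow (Ilset l)).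
               Il x = (SUP lam\<in>Ilset l \<rightarrow>\<^sub>E UNIV.
                         ereal ((\<Sum>I\<in>Ilset l. lam I * x I) - \<phi> lam)))))"
proof -
  have prob: "\<And>n. prob_space (M n)" and radon: "\<And>n \<omega>. \<omega> \<in> space (M n) \<Longrightarrow> radon_on_Delta (\<xi> n \<omega>)"
    using proc unfolding random_radon_process_def by auto
  obtain ps C where ps: "ps \<noteq> []" "\<forall>(s, t)\<in>set ps. 0 \<le> s \<and> s < t"
    and hist: "\<And>\<eta>. radon_on_Delta \<eta> \<Longrightarrow> hist l \<eta> = matrix_map (Ilset l) {..<length ps} C (corner_vec ps \<eta>)"
    using hist_eq_matrix_map_corner_vec by blast
  let ?f = "matrix_map (Ilset l) {..<length ps} C"
  have f: "continuous_map (Rpow {..<length ps}) (Rpow (Ilset l)) ?f"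
    by (simp add: continuous_map_matrix_map)
  have H: "Hausdorff_space (Rpow (Ilset l))" by (simp add: Hausdorff_space_product_topology)
  have ldp: "LDP_good (Rpow {..<length ps}) a M (\<lambda>n \<omega>. corner_vec ps (\<xi> n \<omega>)) (IP ps)"
    using ldp_fd ps by blast
  then have good: "good_rate_function (Rpow {..<length ps}) (IP ps)" unfolding LDP_good_def by blast
  define Il where "Il = contract_rate (Rpow {..<length ps}) ?f (IP ps)"
  have ldp_hist: "LDP_good (Rpow (Ilset l)) a M (\<lambda>n \<omega>. hist l (\<xi> n \<omega>)) Il"
    unfolding Il_def by (rule LDP_good_contraction[OF ldp f H]) (simp add: hist radon)
  have "unique_zero (Rpow (Ilset l)) Il"
    if "\<forall>ps. ps \<noteq> [] \<and> (\<forall>(s, t)\<in>set ps. 0 \<le> s \<and> s < t) \<longrightarrow> unique_zero (Rpow {..<length ps}) (IP ps)"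
    unfolding Il_def using that ps by (intro unique_zero_contract_rate[OF good f H]) blast
  moreover have "convex_on_Rpow (Ilset l) Il"
    if "\<forall>ps. ps \<noteq> [] \<and> (\<forall>(s, t)\<in>set ps. 0 \<le> s \<and> s < t) \<longrightarrow> convex_on_Rpow {..<length ps} (IP ps)"
    unfolding Il_def using that ps
    by (intro convex_on_Rpow_contract_rate[OF good f]) (auto simp: matrix_map_convex_combination)
  ultimately show ?thesis
    using ldp_hist convex_rate_eq_conjugate_of_scgf_limit[OF finite_Ilset ldp_hist a_pos a_lim prob]
    by (intro exI[of _ Il]) blast
qed

end
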